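(* Let $G$ be a trivalent graph with a perfect matching $M$, and let $\Gamma_M$ be a perfect matching graph for the pair $(G,M)$, represented by a ribbon diagram in the plane whose virtual crossings involve only edges of $G\setminus M$. Then for every positive integer $n$, $\left\llbracket \Gamma_M\right\rrbracket=\{G,M\}$.
   Context: Graphs are finite multigraphs. A ribbon graph of $G$ is an embedding of $G$ into a compact surface with boundary that deformation retracts onto the image of $G$; a perfect matching graph $\Gamma_M$ is a ribbon graph of $G$ with a perfect matching $M=\{e_1,\dots,e_\ell\}$. A ribbon diagram is a drawing of it in the plane respecting the cyclic order of edges at each vertex; edge crossings in the drawing are virtual crossings; let $X$ be the set of virtual crossings. Smoothings: for a matching edge $e=uv$ with other edge-ends $a,b$ at $u$ and $c,d$ at $v$, $a$ and $c$ on the same side of $e$, the $0$-smoothing deletes $e,u,v$ and joins $a$–$c$ and $b$–$d$ by two parallel arcs; the $1$-smoothing joins $a$–$d$ and $b$–$c$ by two arcs crossing once (an ordinary crossing). For $\alpha\in\{0,1\}^\ell$ the state $\Gamma_\alpha$ is the resulting collection of closed immersed curves, $|\alpha|=\sum\alpha_i$; each matching edge gives a pair of arcs of $\Gamma_\alpha$. Penrose–Kauffman bracket: $$\left\llbracket \Gamma_M\right\rrbracket=\sum_{\alpha\in\{0,1\}^\ell}\ \sum_{\beta:X\to\{\mathrm{node},\mathrm{cross}\}}(-1)^{|\alpha|}\,2^{\#\beta^{-1}(\mathrm{node})}\,(-1)^{\#\beta^{-1}(\mathrm{cross})}\,n^{c(\alpha,\beta)},$$ where $c(\alpha,\beta)$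 is the number of connected components of the space obtained from the disjoint union of the curves of $\Gamma_\alpha$ by gluing together the two strands at each virtual crossing $x$ with $\beta(x)=\mathrm{node}$ (strands at "cross" crossings just pass through). Equivalently it is defined recursively by: matching edge $=$ $0$-smoothing $-$ $1$-smoothing; virtual crossing $=2\cdot$(node, the two strands treated as part of one circle) $-$ (ordinary crossing); each closed curve, with curves joined at nodes counting as one, has value $n$. Color bracket: $\{G,M\}=\sum_{\alpha}N(\Gamma_\alpha)$, where $N(\Gamma_\alpha)$ is the number of assignments of colors from $\{1,\dots,n\}$ to the curves of $\Gamma_\alpha$ such that, for each matching edge, the two arcs produced by smoothing it lie on curves of different colors. This equals the number of perfect matching $n$-colorings of $(G,M)$: colorings of the non-matching edges with colors from $\{1,\dots,n\}$ such that exactly two distinct colors are used on the edges adjacent to each matching edge and both colors appear at each end of the matching edge. *)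

theory Defs
  imports Main "HOL-Library.FuncSet"
begin

text \<open>
Combinatorial encoding of a ribbon diagram (a drawing in the plane, i.e. on the
sphere) of a perfect matching graph, as a combinatorial map.

 * D : finite set of darts (half-edges) of the *drawing graph*: its vertices
   are the vertices of G (trivalent) and the virtual crossings (4-valent);
   its edges are the segments of edges of G between consecutive
   vertices/crossings.
 * alpha : fixed-point-free involution on D pairing the two ends of a segment.
 * sigma : permutation of D giving the cyclic (counterclockwise) order of
   darts around each vertex of the drawing (rotation system).
 * Mt : the darts belonging to matching edges.

A sigma-orbit of size 3 is a vertex of G, a sigma-orbit of size 4 is a virtual
crossing, whose two strands are d -- sigma (sigma d).  Planarity of the drawing
is the genus-zero (Euler) condition V - E + F = 2 K of the map.
\<close>

definition vorbit :: "('d \<Rightarrow> 'd) \<Rightarrow> 'd \<Rightarrow> 'd set" where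
  "vorbit f d = {(f ^^ k) d | k. True}"

definition orbrel :: "'d set \<Rightarrow> ('d \<Rightarrow> 'd) \<Rightarrow> ('d \<times> 'd) set" where
  "orbrel D f = {(x, y). x \<in> D \<and> y \<in> vorbit f x}"

definition conn :: "('d \<times> 'd) set \<Rightarrow> ('d \<times> 'd) set" where
  "conn L = (L \<union> L\<inverse>)\<^sup>*"

definition pm_diagram :: "'d set \<Rightarrow> ('d \<Rightarrow> 'd) \<Rightarrow> ('d \<Rightarrow> 'd) \<Rightarrow> 'd set \<Rightarrow> bool" where
  "pm_diagram D alpha sigma Mt \<longleftrightarrow>
     finite D \<and>
     (\<forall>d\<in>D. alpha d \<in> D \<and> alpha (alpha d) = d \<and> alpha d \<noteq> d) \<and>
     bij_betw sigma D D \<and>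
     (\<forall>d\<in>D. card (vorbit sigma d) = 3 \<or> card (vorbit sigma d) = 4) \<and>
     Mt \<subseteq> D \<and>
     (\<forall>m\<in>Mt. alpha m \<in> Mt \<and> card (vorbit sigma m) = 3 \<and> alpha m \<notin> vorbit sigma m) \<and>
     (\<forall>d\<in>D. card (vorbit sigma d) = 3 \<longrightarrow> card (vorbit sigma d \<inter> Mt) = 1) \<and>
     \<comment> \<open>every strand through virtual crossings ends at vertices of G (no extra closed curves)\<close>
     (\<forall>d\<in>D. \<exists>k. card (vorbit sigma (alpha (((\<lambda>x. sigma (sigma (alpha x))) ^^ k) d))) = 3) \<and>
     \<comment> \<open>planarity: Euler formula 2V - 2E + 2F = 4K, with 2E = card D\<close>
     2 * int (card (D // orbrel D sigma)) - int (card D)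
       + 2 * int (card (D // orbrel D (sigma \<circ> alpha)))
       = 4 * int (card (D // conn ({(d, sigma d) | d. d \<in> D} \<union> {(d, alpha d) | d. d \<in> D})))"

definition nm_darts :: "'d set \<Rightarrow> 'd set \<Rightarrow> 'd set" where
  "nm_darts D Mt = D - Mt"

definition match_edges :: "('d \<Rightarrow> 'd) \<Rightarrow> 'd set \<Rightarrow> 'd set set" where
  "match_edges alpha Mt = (\<lambda>m. {m, alpha m}) ` Mt"

definition vcrossings :: "'d set \<Rightarrow> ('d \<Rightarrow> 'd) \<Rightarrow> 'd set set" where
  "vcrossings D sigma = {vorbit sigma d | d. d \<in> D \<and> card (vorbit sigma d) = 4}"

text \<open>Links between darts in the state S (set of 1-smoothed matching edges) with
node set T (virtual crossings turned into nodes).  For a matching dart m at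
vertex u, sigma m and sigma (sigma m) (= sigma\<inverse> m) are the other darts at u.
The 0-smoothing joins sigma m with sigma\<inverse>(alpha m) and sigma\<inverse> m with
sigma (alpha m) (same side of the edge); the 1-smoothing joins
sigma m with sigma (alpha m) and sigma\<inverse> m with sigma\<inverse>(alpha m).\<close>
definition state_links ::
  "'d set \<Rightarrow> ('d \<Rightarrow> 'd) \<Rightarrow> ('d \<Rightarrow> 'd) \<Rightarrow> 'd set \<Rightarrow> 'd set set \<Rightarrow> 'd set set \<Rightarrow> ('d \<times> 'd) set" where
  "state_links D alpha sigma Mt S T =
     {(d, alpha d) | d. d \<in> nm_darts D Mt}
   \<union> {(d, sigma (sigma d)) | d. d \<in> D \<and> card (vorbit sigma d) = 4}
   \<union> {(d, sigma d) | d. d \<in> D \<and> vorbit sigma d \<in> T}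
   \<union> {(sigma m, sigma (alpha m)) | m. m \<in> Mt \<and> {m, alpha m} \<in> S}
   \<union> {(sigma (sigma m), sigma (sigma (alpha m))) | m. m \<in> Mt \<and> {m, alpha m} \<in> S}
   \<union> {(sigma m, sigma (sigma (alpha m))) | m. m \<in> Mt \<and> {m, alpha m} \<notin> S}
   \<union> {(sigma (sigma m), sigma (alpha m)) | m. m \<in> Mt \<and> {m, alpha m} \<notin> S}"

text \<open>c(alpha, beta): number of connected components of the state curves glued at nodes\<close>
definition ncomp :: "'d set \<Rightarrow> ('d \<Rightarrow> 'd) \<Rightarrow> ('d \<Rightarrow> 'd) \<Rightarrow> 'd set \<Rightarrow> 'd set set \<Rightarrow> 'd set set \<Rightarrow> nat" where
  "ncomp D alpha sigma Mt S T =
     card (nm_darts D Mt // conn (state_links D alpha sigma Mt S T))"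

definition pk_bracket :: "'d set \<Rightarrow> ('d \<Rightarrow> 'd) \<Rightarrow> ('d \<Rightarrow> 'd) \<Rightarrow> 'd set \<Rightarrow> nat \<Rightarrow> int" where
  "pk_bracket D alpha sigma Mt n =
     (\<Sum>S \<in> Pow (match_edges alpha Mt). \<Sum>T \<in> Pow (vcrossings D sigma).
        (-1) ^ card S * 2 ^ card T * (-1) ^ card (vcrossings D sigma - T)
          * int n ^ ncomp D alpha sigma Mt S T)"

text \<open>N(Gamma_S): colorings of the curves of the state S (no nodes) by {1..n} such that
for each matching edge the two arcs produced by smoothing it (containing sigma m
and sigma\<inverse> m respectively) lie on curves of different colors.\<close>
definition state_colorings :: "'d set \<Rightarrow> ('d \<Rightarrow> 'd) \<Rightarrow> ('d \<Rightarrow> 'd) \<Rightarrow> 'd set \<Rightarrow> 'd set set \<Rightarrow> nat \<Rightarrow> nat" where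
  "state_colorings D alpha sigma Mt S n =
     (let R = conn (state_links D alpha sigma Mt S {}) in
      card {g \<in> (nm_darts D Mt // R) \<rightarrow>\<^sub>E {1..n}.
              \<forall>m\<in>Mt. g (R `` {sigma m}) \<noteq> g (R `` {sigma (sigma m)})})"

definition color_bracket :: "'d set \<Rightarrow> ('d \<Rightarrow> 'd) \<Rightarrow> ('d \<Rightarrow> 'd) \<Rightarrow> 'd set \<Rightarrow> nat \<Rightarrow> int" where
  "color_bracket D alpha sigma Mt n =
     (\<Sum>S \<in> Pow (match_edges alpha Mt). int (state_colorings D alpha sigma Mt S n))"

end

theory Submission
  imports Defs "HOL-Library.Z2"
begin

text \<open>
  Both brackets are sums over labellings \<open>h\<close> of the segments of \<open>G - M\<close> by colours
  \<open>1..n\<close>. The factor \<open>n ^ c(\<alpha>, \<beta>)\<close> counts the labellings that are constant on the curves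
  of the state with nodes, so summing \<open>2 \<cdot> node - cross\<close> over the virtual crossings leaves the
  sign \<open>-1\<close> for each crossing whose two strands get different colours.

  The planar input is a parity statement: for a labelling that is constant on the curves of a
  state, the crossings with differently coloured strands are as many, modulo 2, as the
  1-smoothed matching edges whose two arcs get different colours. For each colour \<open>i\<close> the
  curves of colour \<open>i\<close> form an even subgraph of the drawing; by Euler's formula every even
  subgraph of a plane map bounds a union of faces, and counting sides of that union modulo 2
  proves the parity statement one colour at a time.

  Once the signs have been moved from the crossings to the matching edges, the sum over states
  factors into one term per matching edge, and both brackets reduce to the number of perfect
  matching colourings.
\<close>

section \<open>Orbits of a bijection of a finite set\<close>

lemma funpow_in_bij_betw: "bij_betw f D D \<Longrightarrow> x \<in> D \<Longrightarrow> (f ^^ k) x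
    \<in> D"
  using bij_betw_funpow bij_betwE by metis

lemma funpow_add_apply: "(f ^^ m) ((f ^^ n) x) = (f ^^ (m + n)) x"
  by (simp add: funpow_add)

lemma funpow_mult_fixpoint:
  assumes "(f ^^ p) x = x"
  shows "(f ^^ (p * q)) x = x"
proof -
  have "((f ^^ p) ^^ q) x = x" by (induction q) (simp_all add: assms)
  then show ?thesis by (simp add: funpow_mult)
qed

lemma bij_betw_funpow_cancel:
  assumes "bij_betw f D D" "x \<in> D" "i \<le> j" "(f ^^ i) x = (f ^^ j) x"
  shows "(f ^^ (j - i)) x = x"
proof -
  have "(f ^^ i) ((f ^^ (j - i)) x) = (f ^^ i) x"
    using assms(3,4) by (simp add: funpow_add_apply)
  moreover have "inj_on (f ^^ i) D"
    using bij_betw_funpow[OF assms(1)] bij_betw_imp_inj_on by blast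
  ultimately show ?thesis
    using funpow_in_bij_betw[OF assms(1,2)] assms(2) by (meson inj_onD)
qed

lemma bij_betw_funpow_period:
  assumes "finite D" "bij_betw f D D" "x \<in> D"
  shows "\<exists>p>0. (f ^^ p) x = x"
proof -
  have sub: "(\<lambda>i. (f ^^ i) x) ` {..card D} \<subseteq> D"
    using funpow_in_bij_betw[OF assms(2,3)] by auto
  have "\<not> inj_on (\<lambda>i. (f ^^ i) x) {..card D}"
  proof
    assume "inj_on (\<lambda>i. (f ^^ i) x) {..card D}"
    then have "card ((\<lambda>i. (f ^^ i) x) ` {..card D}) = Suc (card D)" by (simp add:
        card_image)
    then show False using card_mono[OF assms(1) sub] by simp
  qed
  then obtain i j where ij: "i \<noteq> j" "(f ^^ i) x = (f ^^ j) x"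
    unfolding inj_on_def by blast
  then have "(f ^^ (max i j - min i j)) x = x"
    using bij_betw_funpow_cancel[OF assms(2,3), of "min i j" "max i j"]
    by (cases "i \<le> j") (auto simp: min_def max_def)
  moreover have "max i j - min i j > 0" using ij(1) by linarith
  ultimately show ?thesis by blast
qed

lemma vorbit_iff: "y \<in> vorbit f x \<longleftrightarrow> (\<exists>k. y = (f ^^ k) x)"
  by (auto simp: vorbit_def)

lemma vorbit_funpow: "(f ^^ k) x \<in> vorbit f x"
  unfolding vorbit_iff by blast

lemma vorbit_self [simp]: "x \<in> vorbit f x"
  using vorbit_funpow[of 0 f x] by simp

lemma vorbit_step: "y \<in> vorbit f x \<Longrightarrow> f y \<in> vorbit f x"
  unfolding vorbit_iff by (metis comp_apply funpow.simps(2))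

lemma vorbit_step_self [simp]: "f x \<in> vorbit f x"
  by (rule vorbit_step) simp

lemma vorbit_subset: "bij_betw f D D \<Longrightarrow> x \<in> D \<Longrightarrow> vorbit f x
    \<subseteq> D"
  using funpow_in_bij_betw by (auto simp: vorbit_iff)

lemma vorbit_finite: "finite D \<Longrightarrow> bij_betw f D D \<Longrightarrow> x \<in> D
    \<Longrightarrow> finite (vorbit f x)"
  using vorbit_subset[of f D x] finite_subset by blast

lemma vorbit_trans: "y \<in> vorbit f x \<Longrightarrow> vorbit f y \<subseteq> vorbit f x"
proof
  fix z assume "y \<in> vorbit f x" "z \<in> vorbit f y"
  then obtain k j where "y = (f ^^ k) x" "z = (f ^^ j) y" unfolding vorbit_iff by blast
  then show "z \<in> vorbit f x" by (simp add: funpow_add_apply vorbit_funpow)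
qed

lemma vorbit_sym:
  assumes "finite D" "bij_betw f D D" "x \<in> D" "y \<in> vorbit f x"
  shows "x \<in> vorbit f y"
proof -
  obtain k where k: "y = (f ^^ k) x" using assms(4) vorbit_iff by metis
  obtain p where p: "p > 0" "(f ^^ p) x = x" using bij_betw_funpow_period[OF assms(1-3)] by blast
  have "p * k = (p - 1) * k + k" using p(1) by (metis Suc_diff_1 add.commute mult_Suc)
  then have "(f ^^ ((p - 1) * k)) y = (f ^^ (p * k)) x" by (simp add: k funpow_add_apply)
  then show ?thesis using funpow_mult_fixpoint[OF p(2)] by (metis vorbit_funpow)
qed

lemma vorbit_eq:
  assumes "finite D" "bij_betw f D D" "x \<in> D" "y \<in> vorbit f x"
  shows "vorbit f y = vorbit f x"
  using vorbit_trans[OF assms(4)] vorbit_trans[OF vorbit_sym[OF assms]] by (rule equalityI)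

lemma vorbit_disjoint:
  assumes "finite D" "bij_betw f D D" "x \<in> D" "y \<in> D" "vorbit f x \<noteq> vorbit f y"
  shows "vorbit f x \<inter> vorbit f y = {}"
proof (rule ccontr)
  assume "vorbit f x \<inter> vorbit f y \<noteq> {}"
  then obtain z where "z \<in> vorbit f x" "z \<in> vorbit f y" by blast
  then show False using vorbit_eq assms by metis
qed

lemma vorbit_pred:
  assumes "finite D" "bij_betw f D D" "x \<in> D" "z \<in> vorbit f x"
  shows "\<exists>y\<in>vorbit f x. f y = z"
proof -
  have "z \<in> D" using vorbit_subset[OF assms(2,3)] assms(4) by blast
  then obtain p where p: "p > 0" "(f ^^ p) z = z" using bij_betw_funpow_period[OF assms(1,2)] by
      blast
  then have "f ((f ^^ (p - 1)) z) = z" by (metis Suc_diff_1 comp_apply funpow.simps(2))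
  moreover have "(f ^^ (p - 1)) z \<in> vorbit f x"
    using vorbit_eq[OF assms] vorbit_funpow by metis
  ultimately show ?thesis by blast
qed

lemma vorbit_card:
  assumes "finite D" "bij_betw f D D" "x \<in> D" "card (vorbit f x) = k"
  shows "(f ^^ k) x = x" "vorbit f x = (\<lambda>i. (f ^^ i) x) ` {..<k}"
    "inj_on (\<lambda>i. (f ^^ i) x) {..<k}"
proof -
  define p where "p = (LEAST p. p > 0 \<and> (f ^^ p) x = x)"
  have p: "p > 0" "(f ^^ p) x = x"
    using LeastI_ex[OF bij_betw_funpow_period[OF assms(1-3)]] unfolding p_def by auto
  have minimal: "\<not> (q > 0 \<and> (f ^^ q) x = x)" if "q < p" for q
    using not_less_Least[of q "\<lambda>p. p > 0 \<and> (f ^^ p) x = x"] that unfolding p_def by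
        blast
  have mod_p: "(f ^^ k) x = (f ^^ (k mod p)) x" for k
    using funpow_mult_fixpoint[OF p(2), of "k div p"] funpow_add_apply[where m="k mod p" and f=f]
    by (metis mod_mult_div_eq)
  have orbit: "vorbit f x = (\<lambda>i. (f ^^ i) x) ` {..<p}"
  proof
    show "vorbit f x \<subseteq> (\<lambda>i. (f ^^ i) x) ` {..<p}"
    proof
      fix z assume "z \<in> vorbit f x"
      then obtain k where "z = (f ^^ k) x" unfolding vorbit_iff by blast
      then have "z = (f ^^ (k mod p)) x" "k mod p < p" using mod_p p(1) by auto
      then show "z \<in> (\<lambda>i. (f ^^ i) x) ` {..<p}" by blast
    qed
  qed (auto simp: vorbit_funpow)
  have inj: "inj_on (\<lambda>i. (f ^^ i) x) {..<p}"
  proof (rule linorder_inj_onI')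
    fix i j assume ij: "i \<in> {..<p}" "j \<in> {..<p}" "i < j"
    show "(f ^^ i) x \<noteq> (f ^^ j) x"
    proof
      assume "(f ^^ i) x = (f ^^ j) x"
      then have "(f ^^ (j - i)) x = x" using bij_betw_funpow_cancel[OF assms(2,3), of i j] ij by
          simp
      moreover have "0 < j - i" "j - i < p" using ij by auto
      ultimately show False using minimal by blast
    qed
  qed
  have "p = k" using assms(4) orbit inj by (simp add: card_image)
  then show "(f ^^ k) x = x" "vorbit f x = (\<lambda>i. (f ^^ i) x) ` {..<k}"
    "inj_on (\<lambda>i. (f ^^ i) x) {..<k}"
    using p orbit inj by auto
qed

lemma vorbit_card_3:
  assumes "finite D" "bij_betw f D D" "x \<in> D" "card (vorbit f x) = 3"
  shows "f (f (f x)) = x" "x \<noteq> f x" "x \<noteq> f (f x)" "f x \<noteq> f (f x)"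
    "vorbit f x = {x, f x, f (f x)}"
proof -
  note c = vorbit_card[OF assms]
  have distinct: "(f ^^ i) x \<noteq> (f ^^ j) x" if "i < 3" "j < 3" "i \<noteq> j" for i j
    using c(3) that by (meson inj_onD lessThan_iff)
  have "{..<3::nat} = {0, 1, 2}" by auto
  then show "vorbit f x = {x, f x, f (f x)}" using c(2) by (simp add: numeral_2_eq_2)
  show "f (f (f x)) = x" using c(1) by (simp add: numeral_3_eq_3)
  show "x \<noteq> f x" "x \<noteq> f (f x)" "f x \<noteq> f (f x)"
    using distinct[of 0 1] distinct[of 0 2] distinct[of 1 2] by (simp_all add: numeral_2_eq_2)
qed

lemma vorbit_card_4:
  assumes "finite D" "bij_betw f D D" "x \<in> D" "card (vorbit f x) = 4"
  shows "f (f (f (f x))) = x" "x \<noteq> f x" "x \<noteq> f (f x)" "x \<noteq> f (f (f x))"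
    "f x \<noteq> f (f x)" "f x \<noteq> f (f (f x))" "f (f x) \<noteq> f (f (f x))"
    "vorbit f x = {x, f x, f (f x), f (f (f x))}"
proof -
  note c = vorbit_card[OF assms]
  have distinct: "(f ^^ i) x \<noteq> (f ^^ j) x" if "i < 4" "j < 4" "i \<noteq> j" for i j
    using c(3) that by (meson inj_onD lessThan_iff)
  have "{..<4::nat} = {0, 1, 2, 3}" by auto
  then show "vorbit f x = {x, f x, f (f x), f (f (f x))}"
    using c(2) by (simp add: numeral_2_eq_2 numeral_3_eq_3)
  show "f (f (f (f x))) = x" using c(1) by (simp add: eval_nat_numeral)
  show "x \<noteq> f x" "x \<noteq> f (f x)" "x \<noteq> f (f (f x))" "f x \<noteq> f (f x)" "f x
      \<noteq> f (f (f x))"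
    "f (f x) \<noteq> f (f (f x))"
    using distinct[of 0 1] distinct[of 0 2] distinct[of 0 3] distinct[of 1 2] distinct[of 1 3]
      distinct[of 2 3] by (simp_all add: numeral_2_eq_2 numeral_3_eq_3)
qed

lemma equiv_orbrel:
  assumes "finite D" "bij_betw f D D"
  shows "equiv D (orbrel D f)"
proof (rule equivI)
  show "refl_on D (orbrel D f)"
    unfolding refl_on_def orbrel_def using vorbit_subset[OF assms(2)] by auto
  show "sym (orbrel D f)"
  proof (rule symI)
    fix x y assume "(x, y) \<in> orbrel D f"
    then have "x \<in> D" "y \<in> vorbit f x" by (auto simp: orbrel_def)
    then show "(y, x) \<in> orbrel D f"
      using vorbit_sym[OF assms] vorbit_subset[OF assms(2)] by (auto simp: orbrel_def)
  qed
  show "trans (orbrel D f)"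
  proof (rule transI)
    fix x y z assume "(x, y) \<in> orbrel D f" "(y, z) \<in> orbrel D f"
    then show "(x, z) \<in> orbrel D f" using vorbit_trans[of y f x] by (auto simp: orbrel_def)
  qed
  show "orbrel D f \<subseteq> D \<times> D" using vorbit_subset[OF assms(2)] by (auto simp:
      orbrel_def)
qed

section \<open>Counting functions that are constant on classes\<close>

lemma bij_betw_quotient_functions:
  assumes "equiv A R"
  shows "bij_betw (\<lambda>g. \<lambda>x\<in>A. g (R``{x})) (A//R \<rightarrow>\<^sub>E B)
           {h \<in> A \<rightarrow>\<^sub>E B. \<forall>x\<in>A. \<forall>y\<in>A. (x, y) \<in> R
               \<longrightarrow> h x = h y}"
proof -
  have some_rep: "(SOME x. x \<in> c) \<in> A" "R``{SOME x. x \<in> c} = c" if c: "c \<in> A//R"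
      for c
  proof -
    obtain a where a: "a \<in> A" "c = R``{a}" using c unfolding quotient_def by blast
    then have "(SOME x. x \<in> c) \<in> c" using equiv_class_self[OF assms] by (metis someI)
    then show "(SOME x. x \<in> c) \<in> A" "R``{SOME x. x \<in> c} = c"
      using a assms by (metis ImageE equiv_class_eq_iff, metis equiv_class_eq Image_singleton_iff)
  qed
  show ?thesis
  proof (rule bij_betw_byWitness[where f'="\<lambda>h. \<lambda>c\<in>A//R. h (SOME x. x \<in> c)"])
    show "\<forall>g\<in>A//R \<rightarrow>\<^sub>E B. (\<lambda>c\<in>A//R. (\<lambda>x\<in>A. g
        (R``{x})) (SOME x. x \<in> c)) = g"
      using some_rep by (auto simp: fun_eq_iff PiE_def extensional_def)
    show "\<forall>h\<in>{h \<in> A \<rightarrow>\<^sub>E B. \<forall>x\<in>A. \<forall>y\<in>A.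
        (x, y) \<in> R \<longrightarrow> h x = h y}.
            (\<lambda>x\<in>A. (\<lambda>c\<in>A//R. h (SOME x. x \<in> c)) (R``{x})) = h"
    proof (intro ballI ext)
      fix h x assume h: "h \<in> {h \<in> A \<rightarrow>\<^sub>E B. \<forall>x\<in>A.
          \<forall>y\<in>A. (x, y) \<in> R \<longrightarrow> h x = h y}"
      show "(\<lambda>x\<in>A. (\<lambda>c\<in>A//R. h (SOME x. x \<in> c)) (R``{x})) x = h x"
      proof (cases "x \<in> A")
        case True
        then have "(SOME y. y \<in> R``{x}) \<in> R``{x}"
          using assms by (meson equiv_class_self someI_ex)
        then show ?thesis
          using True h some_rep(1)[OF quotientI[OF True]] by (auto intro: quotientI)
      qed (use h in \<open>auto simp: PiE_def extensional_def\<close>)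
    qed
    show "(\<lambda>g. \<lambda>x\<in>A. g (R``{x})) ` (A//R \<rightarrow>\<^sub>E B)
            \<subseteq> {h \<in> A \<rightarrow>\<^sub>E B. \<forall>x\<in>A. \<forall>y\<in>A. (x,
                y) \<in> R \<longrightarrow> h x = h y}"
      using assms by (auto simp: equiv_class_eq quotientI)
    show "(\<lambda>h. \<lambda>c\<in>A//R. h (SOME x. x \<in> c))
            ` {h \<in> A \<rightarrow>\<^sub>E B. \<forall>x\<in>A. \<forall>y\<in>A. (x, y) \<in>
                R \<longrightarrow> h x = h y} \<subseteq> A//R \<rightarrow>\<^sub>E B"
      using some_rep(1) by auto
  qed
qed

lemma card_quotient_functions:
  assumes "finite A" "equiv A R"
  shows "card {h \<in> A \<rightarrow>\<^sub>E B. \<forall>x\<in>A. \<forall>y\<in>A. (x, y) \<in>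
      R \<longrightarrow> h x = h y} = card B ^ card (A//R)"
proof -
  have "card {h \<in> A \<rightarrow>\<^sub>E B. \<forall>x\<in>A. \<forall>y\<in>A. (x, y) \<in> R
      \<longrightarrow> h x = h y} = card (A//R \<rightarrow>\<^sub>E B)"
    using bij_betw_same_card[OF bij_betw_quotient_functions[OF assms(2)]] by (rule sym)
  also have "\<dots> = card B ^ card (A//R)"
    using finite_quotient[OF assms(1) equiv_type[OF assms(2)]] by (simp add: card_PiE)
  finally show ?thesis .
qed

lemma card_quotient_sets:
  assumes "finite A" "equiv A R"
  shows "card {U. U \<subseteq> A \<and> (\<forall>x\<in>A. \<forall>y\<in>A. (x, y) \<in> R
      \<longrightarrow> (x \<in> U \<longleftrightarrow> y \<in> U))}
       = 2 ^ card (A//R)"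
proof -
  let ?F = "{h \<in> A \<rightarrow>\<^sub>E (UNIV :: bool set). \<forall>x\<in>A.
      \<forall>y\<in>A. (x, y) \<in> R \<longrightarrow> h x = h y}"
  have "bij_betw (\<lambda>h. {x \<in> A. h x}) ?F
          {U. U \<subseteq> A \<and> (\<forall>x\<in>A. \<forall>y\<in>A. (x, y) \<in> R
              \<longrightarrow> (x \<in> U \<longleftrightarrow> y \<in> U))}"
    by (rule bij_betw_byWitness[where f'="\<lambda>U. \<lambda>x\<in>A. x \<in> U"])
      (auto simp: PiE_def extensional_def fun_eq_iff)
  then show ?thesis
    using card_quotient_functions[OF assms, of "UNIV :: bool set"] by (simp add: bij_betw_same_card)
qed

lemma conn_sym: "(x, y) \<in> conn L \<Longrightarrow> (y, x) \<in> conn L"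
  unfolding conn_def by (metis converse_Un converse_converse rtrancl_converseI sup_commute)

lemma conn_trans: "(x, y) \<in> conn L \<Longrightarrow> (y, z) \<in> conn L \<Longrightarrow> (x,
    z) \<in> conn L"
  unfolding conn_def by (rule rtrancl_trans)

lemma conn_link: "(x, y) \<in> L \<Longrightarrow> (x, y) \<in> conn L"
  unfolding conn_def by auto

lemma conn_preserves:
  assumes "\<forall>(x, y)\<in>L. h x = h y" "(x, y) \<in> conn L"
  shows "h x = h y"
  using assms(2) unfolding conn_def
  by (induction rule: rtrancl_induct) (use assms(1) in auto)

lemma conn_closed:
  assumes "L \<subseteq> A \<times> A" "(x, y) \<in> conn L" "x \<in> A"
  shows "y \<in> A"
  using assms(2,3) unfolding conn_def
  by (induction rule: rtrancl_induct) (use assms(1) in auto)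

lemma equiv_conn_restrict: "L \<subseteq> A \<times> A \<Longrightarrow> equiv A (conn L \<inter> A
    \<times> A)"
proof (rule equivI)
  show "refl_on A (conn L \<inter> A \<times> A)" unfolding refl_on_def conn_def by auto
  show "sym (conn L \<inter> A \<times> A)" by (rule symI) (use conn_sym[of _ _ L] in blast)
  show "trans (conn L \<inter> A \<times> A)" by (rule transI) (use conn_trans[of _ _ L] in blast)
qed blast

lemma conn_Image_restrict:
  assumes "L \<subseteq> A \<times> A" "x \<in> A"
  shows "conn L `` {x} = (conn L \<inter> A \<times> A) `` {x}"
  using conn_closed[OF assms(1) _ assms(2)] assms(2) by blast

lemma quotient_conn_restrict:
  assumes "L \<subseteq> A \<times> A"
  shows "A // conn L = A // (conn L \<inter> A \<times> A)"
  using conn_Image_restrict[OF assms] by (simp add: quotient_def)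

lemma links_invariant_iff_conn_invariant:
  assumes "L \<subseteq> A \<times> A"
  shows "(\<forall>(x, y)\<in>L. h x = h y) \<longleftrightarrow> (\<forall>x\<in>A.
      \<forall>y\<in>A. (x, y) \<in> conn L \<inter> A \<times> A \<longrightarrow> h x = h y)"
  using assms conn_preserves[of L h] conn_link[of _ _ L] by blast

lemma card_conn_invariant_functions:
  assumes "finite A" "L \<subseteq> A \<times> A"
  shows "card {h \<in> A \<rightarrow>\<^sub>E B. \<forall>(x, y)\<in>L. h x = h y} = card B ^ card
      (A // conn L)"
  using card_quotient_functions[OF assms(1) equiv_conn_restrict[OF assms(2)]]
  unfolding links_invariant_iff_conn_invariant[OF assms(2)] quotient_conn_restrict[OF assms(2)] .

lemma card_conn_invariant_sets:
  assumes "finite A" "L \<subseteq> A \<times> A"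
  shows "card {U. U \<subseteq> A \<and> (\<forall>(x, y)\<in>L. x \<in> U \<longleftrightarrow> y
      \<in> U)} = 2 ^ card (A // conn L)"
  using card_quotient_sets[OF assms(1) equiv_conn_restrict[OF assms(2)]]
  unfolding links_invariant_iff_conn_invariant[OF assms(2), of "\<lambda>x. x \<in> _", symmetric]
    quotient_conn_restrict[OF assms(2)] .

lemma bij_betw_Collect:
  "bij_betw f X Y \<Longrightarrow> bij_betw f {x \<in> X. Q (f x)} {y \<in> Y. Q y}"
  unfolding bij_betw_def inj_on_def by auto

lemma card_conn_quotient_functions_with:
  assumes "finite A" "L \<subseteq> A \<times> A"
  shows "card {g \<in> A // conn L \<rightarrow>\<^sub>E B. Q (\<lambda>x\<in>A. g (conn L `` {x}))}
       = card {h \<in> A \<rightarrow>\<^sub>E B. (\<forall>(x, y)\<in>L. h x = h y) \<and> Q h}"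
proof -
  let ?R = "conn L \<inter> A \<times> A"
  have classes: "(\<lambda>x\<in>A. g (conn L `` {x})) = (\<lambda>x\<in>A. g (?R `` {x}))" for g
      :: "'a set \<Rightarrow> 'b"
    using conn_Image_restrict[OF assms(2)] by (intro restrict_ext) simp
  have "bij_betw (\<lambda>g. \<lambda>x\<in>A. g (?R``{x})) {g \<in> A//?R \<rightarrow>\<^sub>E
      B. Q (\<lambda>x\<in>A. g (?R``{x}))}
           {h \<in> A \<rightarrow>\<^sub>E B. (\<forall>x\<in>A. \<forall>y\<in>A. (x, y) \<in> ?R
               \<longrightarrow> h x = h y) \<and> Q h}"
    using bij_betw_Collect[OF bij_betw_quotient_functions[OF equiv_conn_restrict[OF assms(2)]]]
    by simp
  then show ?thesis
    unfolding quotient_conn_restrict[OF assms(2)] links_invariant_iff_conn_invariant[OF assms(2)]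
      classes by (rule bij_betw_same_card)
qed

section \<open>Parity counting with symmetric differences\<close>

lemma card_filter_xor:
  assumes "finite Y"
  shows "card {x \<in> Y. P x \<noteq> Q x} + 2 * card {x \<in> Y. P x \<and> Q x}
       = card {x \<in> Y. P x} + card {x \<in> Y. Q x}"
proof -
  have "{x \<in> Y. P x} = {x \<in> Y. P x \<and> \<not> Q x} \<union> {x \<in> Y. P x \<and> Q x}"
    "{x \<in> Y. Q x} = {x \<in> Y. Q x \<and> \<not> P x} \<union> {x \<in> Y. P x \<and> Q x}"
    "{x \<in> Y. P x \<noteq> Q x} = {x \<in> Y. P x \<and> \<not> Q x} \<union> {x \<in> Y. Q x
        \<and> \<not> P x}"
    by auto
  then have "card {x \<in> Y. P x} = card {x \<in> Y. P x \<and> \<not> Q x} + card {x \<in> Y. P x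
      \<and> Q x}"
    "card {x \<in> Y. Q x} = card {x \<in> Y. Q x \<and> \<not> P x} + card {x \<in> Y. P x \<and>
        Q x}"
    "card {x \<in> Y. P x \<noteq> Q x} = card {x \<in> Y. P x \<and> \<not> Q x} + card {x \<in>
        Y. Q x \<and> \<not> P x}"
    using assms by (simp_all add: card_Un_disjoint disjoint_iff)
  then show ?thesis by simp
qed

lemma card_Int_sym_diff:
  assumes "finite Y"
  shows "card (Y \<inter> sym_diff b c) + 2 * card (Y \<inter> b \<inter> c) = card (Y \<inter> b)
      + card (Y \<inter> c)"
proof -
  have "{x \<in> Y. (x \<in> b) \<noteq> (x \<in> c)} = Y \<inter> sym_diff b c" "{x \<in> Y. x
      \<in> b \<and> x \<in> c} = Y \<inter> b \<inter> c"
    "{x \<in> Y. x \<in> b} = Y \<inter> b" "{x \<in> Y. x \<in> c} = Y \<inter> c"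
    by auto
  then show ?thesis using card_filter_xor[OF assms, of "\<lambda>x. x \<in> b" "\<lambda>x. x \<in>
      c"] by simp
qed

lemma fixpoint_free_involution_half:
  assumes "finite S" "\<forall>x\<in>S. f x \<in> S \<and> f (f x) = x \<and> f x \<noteq> x"
  shows "\<exists>H. H \<subseteq> S \<and> H \<inter> f ` H = {} \<and> H \<union> f ` H = S"
  using assms
proof (induction "card S" arbitrary: S rule: less_induct)
  case less
  show ?case
  proof (cases "S = {}")
    case False
    then obtain x where x: "x \<in> S" by blast
    let ?S' = "S - {x, f x}"
    have fx: "f x \<in> S" "f (f x) = x" "f x \<noteq> x" using less.prems x by auto
    have "\<forall>y\<in>?S'. f y \<in> ?S' \<and> f (f y) = y \<and> f y \<noteq> y"
      using less.prems fx by (metis Diff_iff insert_iff singletonD)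
    moreover have "card ?S' < card S" using x less.prems(1) by (intro psubset_card_mono) auto
    ultimately obtain H where H: "H \<subseteq> ?S'" "H \<inter> f ` H = {}" "H \<union> f ` H =
        ?S'"
      using less.hyps less.prems(1) by (meson finite_Diff)
    have "x \<notin> f ` H" using H(1) less.prems by (metis Diff_iff image_iff insertCI subsetD)
    then have "insert x H \<inter> f ` insert x H = {}" using H fx(3) by auto
    moreover have "insert x H \<union> f ` insert x H = S" using H(3) x fx by auto
    ultimately show ?thesis using H(1) x by blast
  qed auto
qed

lemma even_card_fixpoint_free_involution:
  assumes "finite P" "\<forall>x\<in>P. f x \<in> P \<and> f (f x) = x \<and> f x \<noteq> x"
  shows "even (card P)"
proof -
  obtain H where H: "H \<subseteq> P" "H \<inter> f ` H = {}" "H \<union> f ` H = P"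
    using fixpoint_free_involution_half[OF assms] by blast
  have "finite H" using H(1) assms(1) finite_subset by blast
  moreover have "inj_on f H" using H(1) assms(2) by (metis inj_onI subsetD)
  ultimately have "card P = 2 * card H" using H by (metis card_Un_disjoint card_image finite_imageI
      mult_2)
  then show ?thesis by simp
qed

lemma sum_sign_reversing_involution:
  assumes "finite A" "\<forall>x\<in>A. f x \<in> A \<and> f (f x) = x" "\<forall>x\<in>A. g (f x)
      = - g x"
  shows "sum g A = (0 :: int)"
proof -
  have "bij_betw f A A" by (rule bij_betw_byWitness[where f'=f]) (use assms(2) in auto)
  then have "sum g A = sum (\<lambda>x. g (f x)) A" using sum.reindex_bij_betw by metis
  also have "\<dots> = - sum g A" using assms(3) by (simp add: sum_negf)
  finally show ?thesis by simp
qed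

lemma card_image_mult_card_kernel:
  assumes "finite C" "\<forall>U\<in>C. \<forall>V\<in>C. sym_diff U V \<in> C"
    "\<forall>U\<in>C. \<forall>V\<in>C. T (sym_diff U V) = sym_diff (T U) (T V)"
  shows "card (T ` C) * card {U \<in> C. T U = {}} = card C"
proof -
  have fibre: "card {U \<in> C. T U = Y} = card {U \<in> C. T U = {}}" if Y: "Y \<in> T ` C" for Y
  proof -
    obtain U0 where U0: "U0 \<in> C" "Y = T U0" using Y by blast
    have "bij_betw (\<lambda>U. sym_diff U U0) {U \<in> C. T U = {}} {U \<in> C. T U = Y}"
      by (rule bij_betw_byWitness[where f'="\<lambda>U. sym_diff U U0"]) (use assms(2,3) U0 in auto)
    then show ?thesis by (simp add: bij_betw_same_card)
  qed
  have "card C = card (\<Union>Y\<in>T ` C. {U \<in> C. T U = Y})" by (rule arg_cong[where f=card])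
      blast
  also have "\<dots> = (\<Sum>Y\<in>T ` C. card {U \<in> C. T U = Y})"
    by (rule card_UN_disjoint) (use assms(1) in auto)
  also have "\<dots> = (\<Sum>Y\<in>T ` C. card {U \<in> C. T U = {}})" using fibre by simp
  finally show ?thesis by simp
qed

lemma minus_one_power_odd_shift:
  assumes "a + 2 * k = b + c" "odd (c :: nat)"
  shows "(-1::int) ^ a = - ((-1) ^ b)"
proof -
  have "even a \<longleftrightarrow> odd b" using assms by presburger
  then show ?thesis by (simp add: minus_one_power_iff)
qed

lemma sum_sign_card_Int_Pow:
  assumes "finite H" "b \<subseteq> H"
  shows "(\<Sum>Y\<in>Pow H. (-1::int) ^ card (Y \<inter> b)) = (if b = {} then 2 ^ card H else 0)"
proof (cases "b = {}")
  case False
  then obtain y where y: "y \<in> b" by blast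
  have "finite b" using assms finite_subset by blast
  have "(-1::int) ^ card (sym_diff Y {y} \<inter> b) = - ((-1) ^ card (Y \<inter> b))" for Y
    unfolding Int_commute[of _ b]
    by (rule minus_one_power_odd_shift[OF card_Int_sym_diff[OF \<open>finite b\<close>]]) (use y in
        simp)
  then have "(\<Sum>Y\<in>Pow H. (-1::int) ^ card (Y \<inter> b)) = 0"
    using assms y by (intro sum_sign_reversing_involution[where f="\<lambda>Y. sym_diff Y {y}"])
        auto
  then show ?thesis using False by simp
qed (use assms in \<open>simp add: card_Pow\<close>)

lemma sum_sign_card_Int_subspace:
  assumes "finite B" "\<forall>b\<in>B. \<forall>c\<in>B. sym_diff b c \<in> B" "finite Y"
  shows "(\<Sum>b\<in>B. (-1::int) ^ card (Y \<inter> b))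
       = (if \<forall>b\<in>B. even (card (Y \<inter> b)) then int (card B) else 0)"
proof (cases "\<forall>b\<in>B. even (card (Y \<inter> b))")
  case False
  then obtain b0 where b0: "b0 \<in> B" "odd (card (Y \<inter> b0))" by blast
  have "(-1::int) ^ card (Y \<inter> sym_diff b b0) = - ((-1) ^ card (Y \<inter> b))" for b
    by (rule minus_one_power_odd_shift[OF card_Int_sym_diff[OF assms(3)] b0(2)])
  then have "(\<Sum>b\<in>B. (-1::int) ^ card (Y \<inter> b)) = 0"
    using assms(1,2) b0(1) by (intro sum_sign_reversing_involution[where f="\<lambda>b. sym_diff b
        b0"]) auto
  then show ?thesis using False by auto
qed simp

lemma card_annihilator_mult_card:
  assumes "finite H" "B \<subseteq> Pow H" "{} \<in> B" "\<forall>b\<in>B. \<forall>c\<in>B.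
      sym_diff b c \<in> B"
  shows "card {Y \<in> Pow H. \<forall>b\<in>B. even (card (Y \<inter> b))} * card B = 2 ^ card H"
proof -
  have finB: "finite B" using assms(1,2) by (meson finite_Pow_iff finite_subset)
  have "int (card {Y \<in> Pow H. \<forall>b\<in>B. even (card (Y \<inter> b))} * card B)
      = (\<Sum>Y\<in>{Y \<in> Pow H. \<forall>b\<in>B. even (card (Y \<inter> b))}. int (card B))"
    by simp
  also have "\<dots> = (\<Sum>Y\<in>Pow H. if \<forall>b\<in>B. even (card (Y \<inter> b)) then int
      (card B) else 0)"
    by (rule sum.inter_filter) (simp add: assms(1))
  also have "\<dots> = (\<Sum>Y\<in>Pow H. \<Sum>b\<in>B. (-1) ^ card (Y \<inter> b))"
  proof (rule sum.cong[OF refl])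
    fix Y assume "Y \<in> Pow H"
    then have "finite Y" using assms(1) finite_subset by auto
    then show "(if \<forall>b\<in>B. even (card (Y \<inter> b)) then int (card B) else 0)
        = (\<Sum>b\<in>B. (-1) ^ card (Y \<inter> b))"
      using sum_sign_card_Int_subspace[OF finB assms(4)] by simp
  qed
  also have "\<dots> = (\<Sum>b\<in>B. \<Sum>Y\<in>Pow H. (-1) ^ card (Y \<inter> b))" by (rule
      sum.swap)
  also have "\<dots> = (\<Sum>b\<in>B. if b = {} then 2 ^ card H else 0)"
  proof (rule sum.cong[OF refl])
    fix b assume "b \<in> B"
    then have "b \<subseteq> H" using assms(2) by blast
    then show "(\<Sum>Y\<in>Pow H. (-1::int) ^ card (Y \<inter> b)) = (if b = {} then 2 ^ card H
        else 0)"
      by (rule sum_sign_card_Int_Pow[OF assms(1)])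
  qed
  also have "\<dots> = int (2 ^ card H)" using finB assms(3) by (simp add: sum.delta)
  finally show ?thesis by (simp only: of_nat_eq_iff)
qed

lemma card_vorbit_boundary_even:
  assumes "finite D" "bij_betw f D D" "x \<in> D"
  shows "even (card {y \<in> vorbit f x. (y \<in> U) \<noteq> (f y \<in> U)})"
proof -
  let ?O = "vorbit f x"
  have "inj_on f {y \<in> ?O. f y \<in> U}"
    by (rule inj_on_subset[OF bij_betw_imp_inj_on[OF assms(2)]]) (use vorbit_subset[OF assms(2,3)]
        in blast)
  moreover have "f ` {y \<in> ?O. f y \<in> U} = {y \<in> ?O. y \<in> U}"
    using vorbit_step[of _ f x] vorbit_pred[OF assms] by blast
  ultimately have "card {y \<in> ?O. f y \<in> U} = card {y \<in> ?O. y \<in> U}" by (metis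
      card_image)
  then have "card {y \<in> ?O. (y \<in> U) \<noteq> (f y \<in> U)} + 2 * card {y \<in> ?O. y \<in>
      U \<and> f y \<in> U}
      = 2 * card {y \<in> ?O. y \<in> U}"
    using card_filter_xor[OF vorbit_finite[OF assms], of "\<lambda>y. y \<in> U" "\<lambda>y. f y
        \<in> U"]
    by (simp only: mult_2)
  then have "even (card {y \<in> ?O. (y \<in> U) \<noteq> (f y \<in> U)} + 2 * card {y \<in> ?O. y
      \<in> U \<and> f y \<in> U})"
    by (simp only: even_mult_iff even_numeral simp_thms)
  then show ?thesis by simp
qed

lemma card_Int_union_of_orbits_even:
  assumes "finite D" "bij_betw f D D" "U \<subseteq> D" "\<forall>x\<in>U. vorbit f x \<subseteq> U"
    and even: "\<forall>x\<in>D. even (card (W \<inter> vorbit f x))"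
  shows "even (card (W \<inter> U))"
proof -
  have "W \<inter> U = (\<Union>C\<in>vorbit f ` U. W \<inter> C)" using assms(4) by auto
  moreover have "card (\<Union>C\<in>vorbit f ` U. W \<inter> C) = (\<Sum>C\<in>vorbit f ` U. card
      (W \<inter> C))"
  proof (rule card_UN_disjoint)
    show "finite (vorbit f ` U)" using assms(1,3) finite_subset by blast
    show "\<forall>C\<in>vorbit f ` U. finite (W \<inter> C)" using vorbit_finite[OF assms(1,2)]
        assms(3) by blast
    show "\<forall>C1\<in>vorbit f ` U. \<forall>C2\<in>vorbit f ` U. C1 \<noteq> C2
        \<longrightarrow> (W \<inter> C1) \<inter> (W \<inter> C2) = {}"
      using vorbit_disjoint[OF assms(1,2)] assms(3) by blast
  qed
  moreover have "even (\<Sum>C\<in>vorbit f ` U. card (W \<inter> C))"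
    using even assms(3) by (intro dvd_sum) blast
  ultimately show ?thesis by simp
qed

section \<open>Even subgraphs of a planar map\<close>

locale dart_map =
  fixes D :: "'d set" and \<alpha> \<sigma> :: "'d \<Rightarrow> 'd"
  assumes finite_darts: "finite D"
    and alpha_in: "\<And>x. x \<in> D \<Longrightarrow> \<alpha> x \<in> D"
    and alpha_alpha: "\<And>x. x \<in> D \<Longrightarrow> \<alpha> (\<alpha> x) = x"
    and alpha_neq: "\<And>x. x \<in> D \<Longrightarrow> \<alpha> x \<noteq> x"
    and bij_sigma: "bij_betw \<sigma> D D"
begin

lemma sigma_in: "x \<in> D \<Longrightarrow> \<sigma> x \<in> D"
  using bij_sigma bij_betwE by blast

lemma bij_alpha: "bij_betw \<alpha> D D"
  by (rule bij_betw_byWitness[where f'=\<alpha>]) (use alpha_in alpha_alpha in auto)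

lemma bij_face: "bij_betw (\<sigma> \<circ> \<alpha>) D D"
  by (rule bij_betw_trans[OF bij_alpha bij_sigma])

definition invariant_sets :: "('d \<Rightarrow> 'd) \<Rightarrow> 'd set set" where
  "invariant_sets f = {U. U \<subseteq> D \<and> (\<forall>x\<in>D. x \<in> U \<longleftrightarrow>
      f x \<in> U)}"

definition map_links :: "('d \<times> 'd) set" where
  "map_links = {(d, \<sigma> d) | d. d \<in> D} \<union> {(d, \<alpha> d) | d. d \<in> D}"

lemma invariant_sets_vorbit:
  assumes "U \<in> invariant_sets f" "bij_betw f D D" "x \<in> D" "y \<in> vorbit f x"
  shows "x \<in> U \<longleftrightarrow> y \<in> U"
proof -
  have "x \<in> U \<longleftrightarrow> (f ^^ k) x \<in> U" for k
  proof (induction k)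
    case (Suc k)
    have "(f ^^ k) x \<in> D" using funpow_in_bij_betw[OF assms(2,3)] .
    then show ?case using Suc assms(1) unfolding invariant_sets_def by auto
  qed simp
  then show ?thesis using assms(4) unfolding vorbit_iff by blast
qed

lemma card_invariant_sets:
  assumes "bij_betw f D D"
  shows "card (invariant_sets f) = 2 ^ card (D // orbrel D f)"
proof -
  have "invariant_sets f
      = {U. U \<subseteq> D \<and> (\<forall>x\<in>D. \<forall>y\<in>D. (x, y) \<in> orbrel D f
          \<longrightarrow> (x \<in> U \<longleftrightarrow> y \<in> U))}"
  proof (intro set_eqI iffI; clarsimp)
    fix U assume "U \<in> invariant_sets f"
    then show "U \<subseteq> D \<and> (\<forall>x\<in>D. \<forall>y\<in>D. (x, y) \<in> orbrel D f
        \<longrightarrow> (x \<in> U \<longleftrightarrow> y \<in> U))"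
      using invariant_sets_vorbit[OF _ assms] unfolding invariant_sets_def orbrel_def by blast
  next
    fix U assume "U \<subseteq> D" "\<forall>x\<in>D. \<forall>y\<in>D. (x, y) \<in> orbrel D f
        \<longrightarrow> (x \<in> U \<longleftrightarrow> y \<in> U)"
    moreover have "f x \<in> D" "(x, f x) \<in> orbrel D f" if "x \<in> D" for x
      using that bij_betwE[OF assms] unfolding orbrel_def by auto
    ultimately show "U \<in> invariant_sets f" unfolding invariant_sets_def by blast
  qed
  then show ?thesis using card_quotient_sets[OF finite_darts equiv_orbrel[OF finite_darts assms]]
      by simp
qed

lemma card_component_sets:
  "card (invariant_sets \<sigma> \<inter> invariant_sets \<alpha>) = 2 ^ card (D // conn map_links)"
proof -
  have "map_links \<subseteq> D \<times> D" unfolding map_links_def using sigma_in alpha_in by auto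
  moreover have "invariant_sets \<sigma> \<inter> invariant_sets \<alpha>
      = {U. U \<subseteq> D \<and> (\<forall>(x, y)\<in>map_links. x \<in> U \<longleftrightarrow>
          y \<in> U)}"
    unfolding invariant_sets_def map_links_def by blast
  ultimately show ?thesis using card_conn_invariant_sets[OF finite_darts] by simp
qed

lemma invariant_sets_sym_diff:
  "U \<in> invariant_sets f \<Longrightarrow> V \<in> invariant_sets f \<Longrightarrow> sym_diff U
      V \<in> invariant_sets f"
  unfolding invariant_sets_def by blast

lemma finite_invariant_sets: "finite (invariant_sets f)"
  using finite_darts by (simp add: invariant_sets_def)

text \<open>An orientation: one dart out of every edge, i.e.\ out of every \<open>\<alpha>\<close>-pair.\<close>

definition half_darts :: "'d set" where
  "half_darts = (SOME H. H \<subseteq> D \<and> H \<inter> \<alpha> ` H = {} \<and> H \<union>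
      \<alpha> ` H = D)"

lemma half_darts: "half_darts \<subseteq> D" "half_darts \<inter> \<alpha> ` half_darts = {}"
  "half_darts \<union> \<alpha> ` half_darts = D"
proof -
  have "\<exists>H. H \<subseteq> D \<and> H \<inter> \<alpha> ` H = {} \<and> H \<union> \<alpha>
      ` H = D"
    by (rule fixpoint_free_involution_half[OF finite_darts]) (use alpha_in alpha_alpha alpha_neq in
        auto)
  then show "half_darts \<subseteq> D" "half_darts \<inter> \<alpha> ` half_darts = {}"
    "half_darts \<union> \<alpha> ` half_darts = D"
    unfolding half_darts_def by (metis (mono_tags, lifting) someI_ex)+
qed

lemma finite_half_darts: "finite half_darts"
  using half_darts(1) finite_darts finite_subset by blast

lemma half_darts_cases:
  assumes "x \<in> D"
  shows "x \<in> half_darts \<or> \<alpha> x \<in> half_darts"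
proof -
  have "x \<in> half_darts \<union> \<alpha> ` half_darts" using half_darts(3) assms by blast
  then show ?thesis using half_darts(1) alpha_alpha by auto
qed

lemma card_darts: "card D = 2 * card half_darts"
proof -
  have "inj_on \<alpha> half_darts" using half_darts(1) alpha_alpha by (metis inj_onI subsetD)
  moreover have "card D = card half_darts + card (\<alpha> ` half_darts)"
    using half_darts finite_half_darts by (metis card_Un_disjoint finite_imageI)
  ultimately show ?thesis by (simp add: card_image)
qed

lemma alpha_closed_half_darts:
  assumes "W \<subseteq> D" "\<forall>x\<in>D. x \<in> W \<longleftrightarrow> \<alpha> x \<in> W"
  shows "(W \<inter> half_darts) \<union> \<alpha> ` (W \<inter> half_darts) = W"
proof
  show "(W \<inter> half_darts) \<union> \<alpha> ` (W \<inter> half_darts) \<subseteq> W"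
    using assms half_darts(1) by blast
  show "W \<subseteq> (W \<inter> half_darts) \<union> \<alpha> ` (W \<inter> half_darts)"
  proof
    fix x assume x: "x \<in> W"
    then have "x \<in> D" using assms(1) by blast
    then consider "x \<in> half_darts" | "\<alpha> x \<in> half_darts" using half_darts_cases by
        blast
    then show "x \<in> (W \<inter> half_darts) \<union> \<alpha> ` (W \<inter> half_darts)"
    proof cases
      case 2
      have "\<alpha> x \<in> W" "x = \<alpha> (\<alpha> x)" using assms(2) alpha_alpha \<open>x
          \<in> D\<close> x by auto
      then show ?thesis using 2 by blast
    qed (use x in blast)
  qed
qed

text \<open>The coboundary of a set of darts \<open>U\<close>, as an edge set in the coordinates of the orientation.\<close>

definition coboundary :: "'d set \<Rightarrow> 'd set" where
  "coboundary U = {x \<in> half_darts. (x \<in> U) \<noteq> (\<alpha> x \<in> U)}"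

lemma coboundary_eq: "coboundary U = {x \<in> D. (x \<in> U) \<noteq> (\<alpha> x \<in> U)}
    \<inter> half_darts"
  unfolding coboundary_def using half_darts(1) by blast

lemma coboundary_sym_diff: "coboundary (sym_diff U V) = sym_diff (coboundary U) (coboundary V)"
  unfolding coboundary_def by auto

lemma coboundary_empty_iff: "coboundary U = {} \<longleftrightarrow> (\<forall>x\<in>D. x \<in> U
    \<longleftrightarrow> \<alpha> x \<in> U)"
proof
  assume empty: "coboundary U = {}"
  have on_half: "y \<in> U \<longleftrightarrow> \<alpha> y \<in> U" if "y \<in> half_darts" for y
    using empty that unfolding coboundary_def by blast
  show "\<forall>x\<in>D. x \<in> U \<longleftrightarrow> \<alpha> x \<in> U"
  proof
    fix x assume x: "x \<in> D"
    show "x \<in> U \<longleftrightarrow> \<alpha> x \<in> U"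
    proof (cases "x \<in> half_darts")
      case False
      then have "\<alpha> x \<in> half_darts" using half_darts_cases x by blast
      then show ?thesis using on_half[of "\<alpha> x"] alpha_alpha[OF x] by simp
    qed (rule on_half)
  qed
next
  assume "\<forall>x\<in>D. x \<in> U \<longleftrightarrow> \<alpha> x \<in> U"
  then show "coboundary U = {}" unfolding coboundary_def using half_darts(1) by blast
qed

lemma invariant_sets_subset: "U \<in> invariant_sets f \<Longrightarrow> U \<subseteq> D"
  unfolding invariant_sets_def by blast

lemma coboundary_empty_iff_invariant:
  "U \<subseteq> D \<Longrightarrow> coboundary U = {} \<longleftrightarrow> U \<in> invariant_sets
      \<alpha>"
  unfolding coboundary_empty_iff invariant_sets_def by blast

lemma kernel_coboundary_vertex_sets:
  "{U \<in> invariant_sets \<sigma>. coboundary U = {}} = invariant_sets \<sigma> \<inter>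
      invariant_sets \<alpha>"
  using coboundary_empty_iff_invariant invariant_sets_subset by auto

lemma invariant_sets_face_iff:
  assumes "U \<in> invariant_sets \<alpha>"
  shows "U \<in> invariant_sets (\<sigma> \<circ> \<alpha>) \<longleftrightarrow> U \<in>
      invariant_sets \<sigma>"
proof -
  have alpha_inv: "U \<subseteq> D" "\<forall>x\<in>D. x \<in> U \<longleftrightarrow> \<alpha> x
      \<in> U"
    using assms unfolding invariant_sets_def by auto
  have "(\<forall>x\<in>D. x \<in> U \<longleftrightarrow> \<sigma> (\<alpha> x) \<in> U)
      \<longleftrightarrow> (\<forall>x\<in>D. x \<in> U \<longleftrightarrow> \<sigma> x \<in> U)"
  proof
    assume face: "\<forall>x\<in>D. x \<in> U \<longleftrightarrow> \<sigma> (\<alpha> x) \<in> U"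
    show "\<forall>x\<in>D. x \<in> U \<longleftrightarrow> \<sigma> x \<in> U"
    proof
      fix x assume x: "x \<in> D"
      have "\<alpha> x \<in> U \<longleftrightarrow> \<sigma> (\<alpha> (\<alpha> x)) \<in> U"
          using face alpha_in[OF x] by blast
      then show "x \<in> U \<longleftrightarrow> \<sigma> x \<in> U" using alpha_inv(2) x
          alpha_alpha[OF x] by simp
    qed
  next
    assume "\<forall>x\<in>D. x \<in> U \<longleftrightarrow> \<sigma> x \<in> U"
    then show "\<forall>x\<in>D. x \<in> U \<longleftrightarrow> \<sigma> (\<alpha> x) \<in> U"
        using alpha_inv(2) alpha_in by blast
  qed
  then show ?thesis using alpha_inv(1) unfolding invariant_sets_def by simp
qed

lemma kernel_coboundary_face_sets:
  "{U \<in> invariant_sets (\<sigma> \<circ> \<alpha>). coboundary U = {}} = invariant_sets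
      \<sigma> \<inter> invariant_sets \<alpha>"
proof (intro set_eqI iffI)
  fix U assume "U \<in> {U \<in> invariant_sets (\<sigma> \<circ> \<alpha>). coboundary U = {}}"
  then have "U \<in> invariant_sets (\<sigma> \<circ> \<alpha>)" "U \<in> invariant_sets \<alpha>"
    using coboundary_empty_iff_invariant invariant_sets_subset by auto
  then show "U \<in> invariant_sets \<sigma> \<inter> invariant_sets \<alpha>" using
      invariant_sets_face_iff by blast
next
  fix U assume U: "U \<in> invariant_sets \<sigma> \<inter> invariant_sets \<alpha>"
  then have "coboundary U = {}"
    using coboundary_empty_iff_invariant invariant_sets_subset by blast
  moreover have "U \<in> invariant_sets (\<sigma> \<circ> \<alpha>)" using invariant_sets_face_iff
      U by blast
  ultimately show "U \<in> {U \<in> invariant_sets (\<sigma> \<circ> \<alpha>). coboundary U = {}}"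
      by blast
qed

lemma card_coboundaries:
  assumes "bij_betw f D D"
    and kernel: "{U \<in> invariant_sets f. coboundary U = {}} = invariant_sets \<sigma> \<inter>
        invariant_sets \<alpha>"
  shows "card (coboundary ` invariant_sets f) * 2 ^ card (D // conn map_links)
       = 2 ^ card (D // orbrel D f)"
  using card_image_mult_card_kernel[OF finite_invariant_sets, of f coboundary]
  unfolding kernel card_component_sets card_invariant_sets[OF assms(1)]
  by (simp add: invariant_sets_sym_diff coboundary_sym_diff)

definition even_subgraphs :: "'d set set" where
  "even_subgraphs = {Y \<in> Pow half_darts. \<forall>x\<in>D. even (card ((Y \<union> \<alpha> `
      Y) \<inter> vorbit \<sigma> x))}"

definition cut_annihilator :: "'d set set" where
  "cut_annihilator =
     {Y \<in> Pow half_darts. \<forall>b\<in>coboundary ` invariant_sets \<sigma>. even (card (Y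
         \<inter> b))}"

lemma even_subgraphs_subset_cut_annihilator: "even_subgraphs \<subseteq> cut_annihilator"
proof
  fix Y assume "Y \<in> even_subgraphs"
  then have Y: "Y \<subseteq> half_darts" "\<forall>x\<in>D. even (card ((Y \<union> \<alpha> ` Y)
      \<inter> vorbit \<sigma> x))"
    unfolding even_subgraphs_def by auto
  have "finite Y" using Y(1) finite_half_darts finite_subset by blast
  have "inj_on \<alpha> Y"
  proof (rule inj_onI)
    fix a b assume "a \<in> Y" "b \<in> Y" "\<alpha> a = \<alpha> b"
    then show "a = b" using Y(1) half_darts(1) alpha_alpha by (metis subsetD)
  qed
  have "even (card (Y \<inter> coboundary U))" if U: "U \<in> invariant_sets \<sigma>" for U
  proof -
    let ?k = "card {x \<in> Y. x \<in> U \<and> \<alpha> x \<in> U}"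
    have "inj_on \<alpha> {x \<in> Y. \<alpha> x \<in> U}" using \<open>inj_on \<alpha> Y\<close>
        by (rule inj_on_subset) blast
    moreover have "\<alpha> ` {x \<in> Y. \<alpha> x \<in> U} = \<alpha> ` Y \<inter> U" by blast
    ultimately have alpha_part: "card {x \<in> Y. \<alpha> x \<in> U} = card (\<alpha> ` Y \<inter>
        U)" by (metis card_image)
    have "Y \<inter> coboundary U = {x \<in> Y. (x \<in> U) \<noteq> (\<alpha> x \<in> U)}"
      using Y(1) unfolding coboundary_def by blast
    moreover have "{x \<in> Y. x \<in> U} = Y \<inter> U" by blast
    ultimately have "card (Y \<inter> coboundary U) + 2 * ?k = card (Y \<inter> U) + card (\<alpha>
        ` Y \<inter> U)"
      using card_filter_xor[OF \<open>finite Y\<close>, of "\<lambda>x. x \<in> U" "\<lambda>x.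
          \<alpha> x \<in> U"] alpha_part
      by (simp only:)
    also have "\<dots> = card ((Y \<union> \<alpha> ` Y) \<inter> U)"
    proof -
      have "(Y \<union> \<alpha> ` Y) \<inter> U = (Y \<inter> U) \<union> (\<alpha> ` Y \<inter>
          U)" by blast
      moreover have "(Y \<inter> U) \<inter> (\<alpha> ` Y \<inter> U) = {}" using Y(1)
          half_darts(2) by blast
      ultimately show ?thesis using \<open>finite Y\<close> by (simp add: card_Un_disjoint)
    qed
    finally have sum: "card (Y \<inter> coboundary U) + 2 * ?k = card ((Y \<union> \<alpha> ` Y)
        \<inter> U)" .
    have "U \<subseteq> D" "\<forall>x\<in>U. vorbit \<sigma> x \<subseteq> U"
      using invariant_sets_vorbit[OF U bij_sigma] invariant_sets_subset[OF U] by blast+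
    then have "even (card ((Y \<union> \<alpha> ` Y) \<inter> U))"
      using card_Int_union_of_orbits_even[OF finite_darts bij_sigma] Y(2) by blast
    then have "even (card (Y \<inter> coboundary U) + 2 * ?k)" by (simp only: sum)
    then show ?thesis by simp
  qed
  then show "Y \<in> cut_annihilator" unfolding cut_annihilator_def using Y(1) by blast
qed

lemma face_coboundaries_even: "coboundary ` invariant_sets (\<sigma> \<circ> \<alpha>) \<subseteq>
    even_subgraphs"
proof
  fix Y assume "Y \<in> coboundary ` invariant_sets (\<sigma> \<circ> \<alpha>)"
  then obtain U where U: "U \<in> invariant_sets (\<sigma> \<circ> \<alpha>)" "Y = coboundary U" by
      blast
  let ?W = "{x \<in> D. (x \<in> U) \<noteq> (\<alpha> x \<in> U)}"
  have "?W \<subseteq> D" "\<forall>x\<in>D. x \<in> ?W \<longleftrightarrow> \<alpha> x \<in> ?W"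
      using alpha_in alpha_alpha by auto
  then have W: "Y \<union> \<alpha> ` Y = ?W"
    unfolding U(2) coboundary_eq by (rule alpha_closed_half_darts)
  have alpha_sigma: "\<alpha> y \<in> U \<longleftrightarrow> \<sigma> y \<in> U" if "y \<in> D"
      for y
  proof -
    have "\<alpha> y \<in> U \<longleftrightarrow> (\<sigma> \<circ> \<alpha>) (\<alpha> y) \<in> U"
      using U(1) alpha_in[OF that] unfolding invariant_sets_def by blast
    then show ?thesis using alpha_alpha[OF that] by simp
  qed
  have "even (card (?W \<inter> vorbit \<sigma> x))" if "x \<in> D" for x
  proof -
    have "?W \<inter> vorbit \<sigma> x = {y \<in> vorbit \<sigma> x. (y \<in> U) \<noteq>
        (\<sigma> y \<in> U)}"
      using vorbit_subset[OF bij_sigma that] alpha_sigma by blast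
    then show ?thesis using card_vorbit_boundary_even[OF finite_darts bij_sigma that] by simp
  qed
  moreover have "Y \<subseteq> half_darts" unfolding U(2) coboundary_def by blast
  ultimately show "Y \<in> even_subgraphs" unfolding even_subgraphs_def using W by auto
qed

text \<open>Both spaces have dimension \<open>E - V + K\<close>, where the hypothesis is Euler's formula
  \<open>V - E + F = 2K\<close> for a map of genus zero.\<close>

lemma even_subgraphs_eq_face_coboundaries:
  assumes euler: "2 * int (card (D // orbrel D \<sigma>)) - int (card D)
       + 2 * int (card (D // orbrel D (\<sigma> \<circ> \<alpha>))) = 4 * int (card (D // conn
           map_links))"
  shows "even_subgraphs = coboundary ` invariant_sets (\<sigma> \<circ> \<alpha>)"
proof -
  let ?V = "card (D // orbrel D \<sigma>)" and ?F = "card (D // orbrel D (\<sigma> \<circ>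
      \<alpha>))"
    and ?K = "card (D // conn map_links)" and ?h = "card half_darts"
    and ?cuts = "coboundary ` invariant_sets \<sigma>" and ?faces = "coboundary ` invariant_sets
        (\<sigma> \<circ> \<alpha>)"
  have cuts: "card ?cuts * 2 ^ ?K = 2 ^ ?V"
    by (rule card_coboundaries[OF bij_sigma kernel_coboundary_vertex_sets])
  have faces: "card ?faces * 2 ^ ?K = 2 ^ ?F"
    by (rule card_coboundaries[OF bij_face kernel_coboundary_face_sets])
  have "coboundary {} = {}" "{} \<in> invariant_sets \<sigma>"
    by (auto simp: coboundary_def invariant_sets_def)
  then have "{} \<in> ?cuts" by (metis image_eqI)
  moreover have "sym_diff b c \<in> ?cuts" if bc: "b \<in> ?cuts" "c \<in> ?cuts" for b c
  proof -
    obtain U V where "U \<in> invariant_sets \<sigma>" "V \<in> invariant_sets \<sigma>"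
      "b = coboundary U" "c = coboundary V" using bc by blast
    then show ?thesis using invariant_sets_sym_diff coboundary_sym_diff by (metis image_eqI)
  qed
  ultimately have annihilator: "card cut_annihilator * card ?cuts = 2 ^ ?h"
    unfolding cut_annihilator_def
    by (intro card_annihilator_mult_card[OF finite_half_darts]) (auto simp: coboundary_def)
  have euler': "?V + ?F = ?h + 2 * ?K" using euler card_darts by linarith
  have "card cut_annihilator * 2 ^ (?V + ?K) = card cut_annihilator * card ?cuts * 2 ^ ?K * 2 ^ ?K"
    using cuts by (simp add: power_add mult.assoc)
  also have "\<dots> = 2 ^ (?V + ?F)" using annihilator euler' by (simp add: power_add mult_2
      mult.assoc)
  also have "\<dots> = card ?faces * 2 ^ (?V + ?K)"
    using faces by (simp add: power_add mult.commute mult.left_commute)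
  finally have "card cut_annihilator = card ?faces" by simp
  moreover have "?faces \<subseteq> cut_annihilator"
    using face_coboundaries_even even_subgraphs_subset_cut_annihilator by blast
  moreover have "finite cut_annihilator"
    unfolding cut_annihilator_def using finite_half_darts by simp
  ultimately have "?faces = cut_annihilator" by (metis card_subset_eq)
  then show ?thesis
    using face_coboundaries_even even_subgraphs_subset_cut_annihilator by blast
qed

lemma even_subgraph_face_coboundary:
  assumes euler: "2 * int (card (D // orbrel D \<sigma>)) - int (card D)
       + 2 * int (card (D // orbrel D (\<sigma> \<circ> \<alpha>))) = 4 * int (card (D // conn
           map_links))"
    and W: "W \<subseteq> D" "\<forall>x\<in>D. x \<in> W \<longleftrightarrow> \<alpha> x \<in> W"
        "\<forall>x\<in>D. even (card (W \<inter> vorbit \<sigma> x))"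
  shows "\<exists>U. U \<subseteq> D \<and> (\<forall>x\<in>D. x \<in> U \<longleftrightarrow>
      \<sigma> (\<alpha> x) \<in> U)
           \<and> (\<forall>x\<in>D. x \<in> W \<longleftrightarrow> (x \<in> U) \<noteq> (\<alpha>
               x \<in> U))"
proof -
  have "W \<inter> half_darts \<in> even_subgraphs"
    using alpha_closed_half_darts[OF W(1,2)] W(3) unfolding even_subgraphs_def by auto
  then obtain U where U: "U \<in> invariant_sets (\<sigma> \<circ> \<alpha>)" "W \<inter>
      half_darts = coboundary U"
    using even_subgraphs_eq_face_coboundaries[OF euler] by blast
  let ?W' = "{x \<in> D. (x \<in> U) \<noteq> (\<alpha> x \<in> U)}"
  have "?W' \<subseteq> D" "\<forall>x\<in>D. x \<in> ?W' \<longleftrightarrow> \<alpha> x \<in>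
      ?W'" using alpha_in alpha_alpha by auto
  then have "?W' = coboundary U \<union> \<alpha> ` coboundary U"
    unfolding coboundary_eq by (rule alpha_closed_half_darts[symmetric])
  moreover have "W = coboundary U \<union> \<alpha> ` coboundary U"
    using alpha_closed_half_darts[OF W(1,2)] U(2) by simp
  ultimately have "W = ?W'" by simp
  then show ?thesis using U(1) unfolding invariant_sets_def by auto
qed

end

lemma of_bool_add_of_bool_bit: "of_bool P + of_bool Q = (of_bool (P \<noteq> Q) :: bit)"
  by (cases P; cases Q) simp_all

text \<open>The local case analyses behind \<open>crossing_contribution\<close> and \<open>medge_contribution\<close>:
  the \<open>p\<close>'s and \<open>q\<close>'s say which darts around a vertex lie in a set of faces, the \<open>E\<close>'s which
  segments have colour \<open>i\<close>, and the \<open>G\<close>'s which have a larger colour.\<close>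

lemma bit_crossing_identity:
  assumes "(p0 \<noteq> p1) = E1" "(p1 \<noteq> p2) = E2" "(p2 \<noteq> p3) = E1" "(p3 \<noteq> p0)
      = E2"
    "\<not>(G1 \<and> E1)" "\<not>(G2 \<and> E2)"
  shows "of_bool (G1 \<and> p1) + of_bool (G2 \<and> p2) + of_bool (G1 \<and> p3) + of_bool (G2
      \<and> p0)
     = (of_bool (G1 \<and> E2) + of_bool (G2 \<and> E1) :: bit)"
  using assms by (cases p0; cases p1; cases p2; cases p3; cases G1; cases G2) simp_all

lemma bit_one_smoothing_identity:
  assumes "(p1 \<noteq> p2) = Ea" "(p2 \<noteq> p0) = Eb" "(p0 \<noteq> q0) = (Ea \<noteq> Eb)"
    "(q1 \<noteq> q2) = Ea" "(q2 \<noteq> q0) = Eb"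
    "\<not>(Ga \<and> Ea)" "\<not>(Gb \<and> Eb)"
  shows "of_bool (Ga \<and> p2) + of_bool (Gb \<and> p0) + of_bool (Ga \<and> q2) + of_bool (Gb
      \<and> q0)
     = (of_bool (Ga \<and> Eb) + of_bool (Gb \<and> Ea) :: bit)"
  using assms by (cases p0; cases q0; cases p2; cases q2; cases Ga; cases Gb) simp_all

lemma bit_zero_smoothing_identity:
  assumes "(p1 \<noteq> p2) = Ea" "(p2 \<noteq> p0) = Eb" "(p0 \<noteq> q0) = (Ea \<noteq> Eb)"
    "(q1 \<noteq> q2) = Eb" "(q2 \<noteq> q0) = Ea"
    "\<not>(Ga \<and> Ea)" "\<not>(Gb \<and> Eb)"
  shows "of_bool (Ga \<and> p2) + of_bool (Gb \<and> p0) + of_bool (Gb \<and> q2) + of_bool (Ga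
      \<and> q0)
     = (0 :: bit)"
  using assms by (cases p0; cases q0; cases p2; cases q2; cases Ga; cases Gb) simp_all

lemma of_nat_bit_eq_0_iff: "(of_nat n :: bit) = 0 \<longleftrightarrow> even n"
proof (induction n)
  case 0 then show ?case by simp
next
  case (Suc n)
  have "(of_nat (Suc n) :: bit) = 1 + of_nat n" by simp
  then show ?case using Suc by (cases "(of_nat n :: bit)") auto
qed

lemma sum_of_bool_bit: "finite A \<Longrightarrow> (\<Sum>a\<in>A. of_bool (P a) :: bit) = of_nat
    (card {a\<in>A. P a})"
proof -
  assume fA: "finite A"
  have "(\<Sum>a\<in>A. of_bool (P a) :: bit) = (\<Sum>a\<in>A. if P a then 1 else 0)" by (simp
      add: of_bool_def)
  also have "\<dots> = (\<Sum>a\<in>{a\<in>A. P a}. 1)" using sum.inter_filter[OF fA, of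
      "\<lambda>_. (1::bit)" P] by simp
  also have "\<dots> = of_nat (card {a\<in>A. P a})" by simp
  finally show ?thesis .
qed

lemma sum_of_bool_greater_delta:
  assumes "finite I" "(b::nat) \<in> I"
  shows "(\<Sum>i\<in>I. of_bool (a > i \<and> b = i) :: bit) = of_bool (b < a)"
proof -
  have "(\<Sum>i\<in>I. of_bool (a > i \<and> b = i) :: bit) = (\<Sum>i\<in>I. if b = i then
      of_bool (a > i) else 0)"
    by (rule sum.cong) auto
  also have "\<dots> = of_bool (b < a)" using assms by (simp add: sum.delta)
  finally show ?thesis .
qed

lemma sum_colour_split:
  fixes a b :: nat
  assumes "finite I" "a \<in> I" "b \<in> I"
  shows "(\<Sum>i\<in>I. of_bool (a > i \<and> b = i) + of_bool (b > i \<and> a = i) :: bit) =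
      of_bool (a \<noteq> b)"
proof -
  have "(\<Sum>i\<in>I. of_bool (a > i \<and> b = i) + of_bool (b > i \<and> a = i) :: bit)
      = (\<Sum>i\<in>I. of_bool (a > i \<and> b = i)) + (\<Sum>i\<in>I. of_bool (b > i \<and> a =
          i))"
    by (rule sum.distrib)
  also have "\<dots> = of_bool (b < a) + of_bool (a < b)"
    unfolding sum_of_bool_greater_delta[OF assms(1,3)] sum_of_bool_greater_delta[OF assms(1,2)] ..
  also have "\<dots> = of_bool (a \<noteq> b)" unfolding of_bool_add_of_bool_bit by (rule arg_cong)
      auto
  finally show ?thesis .
qed

definition rep :: "'a set \<Rightarrow> 'a" where "rep A = (SOME x. x \<in> A)"

lemma rep_in: "x \<in> A \<Longrightarrow> rep A \<in> A"
  unfolding rep_def by (rule someI)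

lemma sum_quadruple:
  assumes "a \<noteq> b" "a \<noteq> c" "a \<noteq> d" "b \<noteq> c" "b \<noteq> d" "c \<noteq> d"
  shows "(\<Sum>x\<in>{a,b,c,d}. F x) = F a + F b + F c + (F d :: 'b::comm_monoid_add)"
  using assms by (simp add: add.assoc)

lemma sum_triple:
  assumes "a \<noteq> b" "a \<noteq> c" "b \<noteq> c"
  shows "(\<Sum>x\<in>{a,b,c}. F x) = F a + F b + (F c :: 'b::comm_monoid_add)"
  using assms by (simp add: add.assoc)

lemma sum_pair:
  assumes "a \<noteq> b"
  shows "(\<Sum>x\<in>{a,b}. F x) = F a + (F b :: 'b::comm_monoid_add)"
  using assms by simp

section \<open>The dart structure of a perfect matching diagram\<close>

locale matching_diagram =
  fixes D :: "'d set" and \<alpha> \<sigma> :: "'d \<Rightarrow> 'd" and Mt :: "'d set"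
  assumes diagram: "pm_diagram D \<alpha> \<sigma> Mt"
begin

sublocale dart_map D \<alpha> \<sigma>
  using diagram unfolding pm_diagram_def by unfold_locales auto

lemma vertex_or_crossing: "d \<in> D \<Longrightarrow> card (vorbit \<sigma> d) = 3 \<or> card
    (vorbit \<sigma> d) = 4"
  using diagram unfolding pm_diagram_def by blast

lemma matching_subset: "Mt \<subseteq> D"
  using diagram unfolding pm_diagram_def by blast

lemma matching_in: "m \<in> Mt \<Longrightarrow> m \<in> D"
  using matching_subset by blast

lemma matching_alpha: "m \<in> Mt \<Longrightarrow> \<alpha> m \<in> Mt"
  using diagram unfolding pm_diagram_def by blast

lemma matching_at_vertex: "m \<in> Mt \<Longrightarrow> card (vorbit \<sigma> m) = 3"
  using diagram unfolding pm_diagram_def by blast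

lemma one_matching_dart_at_vertex:
  "d \<in> D \<Longrightarrow> card (vorbit \<sigma> d) = 3 \<Longrightarrow> card (vorbit \<sigma>
      d \<inter> Mt) = 1"
  using diagram unfolding pm_diagram_def by blast

lemma euler: "2 * int (card (D // orbrel D \<sigma>)) - int (card D)
    + 2 * int (card (D // orbrel D (\<sigma> \<circ> \<alpha>))) = 4 * int (card (D // conn
        map_links))"
  using diagram unfolding pm_diagram_def map_links_def by blast

lemmas vertex_orbit = vorbit_card_3[OF finite_darts bij_sigma]
lemmas crossing_orbit = vorbit_card_4[OF finite_darts bij_sigma]

lemma vorbit_mem:
  assumes "x \<in> D" "y \<in> vorbit \<sigma> x"
  shows "vorbit \<sigma> y = vorbit \<sigma> x" "y \<in> D"
  using vorbit_eq[OF finite_darts bij_sigma assms] vorbit_subset[OF bij_sigma assms(1)] assms(2)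
  by auto

lemma matching_dart_unique:
  assumes "x \<in> D" "card (vorbit \<sigma> x) = 3" "m \<in> Mt" "m \<in> vorbit \<sigma> x" "m'
      \<in> Mt" "m' \<in> vorbit \<sigma> x"
  shows "m = m'"
proof -
  obtain a where a: "vorbit \<sigma> x \<inter> Mt = {a}" using one_matching_dart_at_vertex[OF
      assms(1,2)] card_1_singletonE by blast
  have "m \<in> vorbit \<sigma> x \<inter> Mt" "m' \<in> vorbit \<sigma> x \<inter> Mt" using
      assms(3-6) by simp_all
  then show ?thesis unfolding a by simp
qed

lemma matching_dart:
  assumes m: "m \<in> Mt"
  shows "m \<in> D" "\<sigma> m \<in> D" "\<sigma> (\<sigma> m) \<in> D" "\<sigma> m \<notin> Mt"
      "\<sigma> (\<sigma> m) \<notin> Mt"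
    "\<sigma> (\<sigma> (\<sigma> m)) = m" "m \<noteq> \<sigma> m" "m \<noteq> \<sigma> (\<sigma>
        m)" "\<sigma> m \<noteq> \<sigma> (\<sigma> m)"
    "vorbit \<sigma> m = {m, \<sigma> m, \<sigma> (\<sigma> m)}"
    "card (vorbit \<sigma> (\<sigma> m)) = 3" "card (vorbit \<sigma> (\<sigma> (\<sigma> m))) = 3"
proof -
  show mD: "m \<in> D" using matching_in[OF m] .
  have c3: "card (vorbit \<sigma> m) = 3" using matching_at_vertex[OF m] .
  show "\<sigma> m \<in> D" "\<sigma> (\<sigma> m) \<in> D" using sigma_in mD by auto
  note o = vertex_orbit[OF mD c3]
  show "\<sigma> (\<sigma> (\<sigma> m)) = m" "m \<noteq> \<sigma> m" "m \<noteq> \<sigma>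
      (\<sigma> m)" "\<sigma> m \<noteq> \<sigma> (\<sigma> m)"
    "vorbit \<sigma> m = {m, \<sigma> m, \<sigma> (\<sigma> m)}" using o by auto
  have in1: "\<sigma> m \<in> vorbit \<sigma> m" and in2: "\<sigma> (\<sigma> m) \<in> vorbit
      \<sigma> m" using o(5) by auto
  show "\<sigma> m \<notin> Mt"
  proof
    assume "\<sigma> m \<in> Mt"
    then have "m = \<sigma> m" using matching_dart_unique[OF mD c3 m _ _ in1] by simp
    then show False using o(2) by simp
  qed
  show "\<sigma> (\<sigma> m) \<notin> Mt"
  proof
    assume "\<sigma> (\<sigma> m) \<in> Mt"
    then have "m = \<sigma> (\<sigma> m)" using matching_dart_unique[OF mD c3 m _ _ in2] by simp
    then show False using o(3) by simp
  qed
  show "card (vorbit \<sigma> (\<sigma> m)) = 3" using vorbit_mem(1)[OF mD in1] c3 by simp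
  show "card (vorbit \<sigma> (\<sigma> (\<sigma> m))) = 3" using vorbit_mem(1)[OF mD in2] c3 by
      simp
qed

lemma crossing_dart:
  assumes x: "x \<in> D" and c4: "card (vorbit \<sigma> x) = 4"
  shows "x \<notin> Mt" "\<sigma> x \<in> D" "card (vorbit \<sigma> (\<sigma> x)) = 4" "\<sigma> x
      \<notin> Mt"
    "\<sigma> (\<sigma> x) \<in> D" "card (vorbit \<sigma> (\<sigma> (\<sigma> x))) = 4" "\<sigma>
        (\<sigma> x) \<notin> Mt"
    "\<sigma> (\<sigma> (\<sigma> x)) \<in> D" "card (vorbit \<sigma> (\<sigma> (\<sigma> (\<sigma>
        x)))) = 4" "\<sigma> (\<sigma> (\<sigma> x)) \<notin> Mt"
proof -
  show "x \<notin> Mt" using matching_at_vertex c4 by force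
  have i1: "\<sigma> x \<in> vorbit \<sigma> x" by simp
  have i2: "\<sigma> (\<sigma> x) \<in> vorbit \<sigma> x" by (rule vorbit_step) simp
  have i3: "\<sigma> (\<sigma> (\<sigma> x)) \<in> vorbit \<sigma> x" by (rule vorbit_step) (rule
      i2)
  show "\<sigma> x \<in> D" "\<sigma> (\<sigma> x) \<in> D" "\<sigma> (\<sigma> (\<sigma> x)) \<in>
      D" using vorbit_mem(2)[OF x] i1 i2 i3 by auto
  show c1: "card (vorbit \<sigma> (\<sigma> x)) = 4" using vorbit_mem(1)[OF x i1] c4 by simp
  show c2: "card (vorbit \<sigma> (\<sigma> (\<sigma> x))) = 4" using vorbit_mem(1)[OF x i2] c4 by
      simp
  show c3: "card (vorbit \<sigma> (\<sigma> (\<sigma> (\<sigma> x)))) = 4" using vorbit_mem(1)[OF x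
      i3] c4 by simp
  show "\<sigma> x \<notin> Mt" using matching_at_vertex c1 by force
  show "\<sigma> (\<sigma> x) \<notin> Mt" using matching_at_vertex c2 by force
  show "\<sigma> (\<sigma> (\<sigma> x)) \<notin> Mt" using matching_at_vertex c3 by force
qed

lemma non_matching_dart_cases:
  assumes "x \<in> D" "x \<notin> Mt"
  shows "card (vorbit \<sigma> x) = 4 \<or> (\<exists>m\<in>Mt. x = \<sigma> m \<or> x = \<sigma>
      (\<sigma> m))"
proof (cases "card (vorbit \<sigma> x) = 4")
  case True then show ?thesis by simp
next
  case False
  then have c3: "card (vorbit \<sigma> x) = 3" using vertex_or_crossing[OF assms(1)] by simp
  then have "vorbit \<sigma> x \<inter> Mt \<noteq> {}" using one_matching_dart_at_vertex[OF
      assms(1)] by auto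
  then obtain m where m: "m \<in> vorbit \<sigma> x" "m \<in> Mt" by blast
  have "vorbit \<sigma> m = vorbit \<sigma> x" using vorbit_mem(1)[OF assms(1) m(1)] .
  then have "x \<in> {m, \<sigma> m, \<sigma> (\<sigma> m)}" using matching_dart(10)[OF m(2)]
      vorbit_self[of x \<sigma>] by simp
  then show ?thesis using m(2) assms(2) by auto
qed

lemma alpha_non_matching: "x \<in> D \<Longrightarrow> x \<notin> Mt \<Longrightarrow> \<alpha> x
    \<notin> Mt"
  using matching_alpha alpha_alpha by metis

definition smoothing_links :: "'d set set \<Rightarrow> ('d \<times> 'd) set" where
  "smoothing_links S = state_links D \<alpha> \<sigma> Mt S {}"

definition compatible :: "'d set set \<Rightarrow> ('d \<Rightarrow> nat) \<Rightarrow> bool" where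
  "compatible S h \<longleftrightarrow> (\<forall>(x, y)\<in>smoothing_links S. h x = h y)"

lemma compatibleD:
  assumes "compatible S h"
  shows "\<And>d. d \<in> D \<Longrightarrow> d \<notin> Mt \<Longrightarrow> h (\<alpha> d) = h d"
    "\<And>d. d \<in> D \<Longrightarrow> card (vorbit \<sigma> d) = 4 \<Longrightarrow> h
        (\<sigma> (\<sigma> d)) = h d"
    "\<And>m. m \<in> Mt \<Longrightarrow> {m, \<alpha> m} \<in> S \<Longrightarrow> h (\<sigma>
        (\<alpha> m)) = h (\<sigma> m) \<and> h (\<sigma> (\<sigma> (\<alpha> m))) = h (\<sigma>
            (\<sigma> m))"
    "\<And>m. m \<in> Mt \<Longrightarrow> {m, \<alpha> m} \<notin> S \<Longrightarrow> h (\<sigma>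
        (\<sigma> (\<alpha> m))) = h (\<sigma> m) \<and> h (\<sigma> (\<alpha> m)) = h (\<sigma>
            (\<sigma> m))"
proof -
  have R: "h x = h y" if "(x,y) \<in> smoothing_links S" for x y using assms that unfolding
      compatible_def by blast
  show "h (\<alpha> d) = h d" if "d \<in> D" "d \<notin> Mt" for d
  proof -
    have "(d, \<alpha> d) \<in> smoothing_links S" unfolding smoothing_links_def state_links_def
        nm_darts_def using that by blast
    then show ?thesis using R by simp
  qed
  show "h (\<sigma> (\<sigma> d)) = h d" if "d \<in> D" "card (vorbit \<sigma> d) = 4" for d
  proof -
    have "(d, \<sigma> (\<sigma> d)) \<in> smoothing_links S" unfolding smoothing_links_def
        state_links_def using that by blast
    then show ?thesis using R by simp
  qed
  show "h (\<sigma> (\<alpha> m)) = h (\<sigma> m) \<and> h (\<sigma> (\<sigma> (\<alpha> m))) = h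
      (\<sigma> (\<sigma> m))" if "m \<in> Mt" "{m, \<alpha> m} \<in> S" for m
  proof -
    have "(\<sigma> m, \<sigma> (\<alpha> m)) \<in> smoothing_links S" "(\<sigma> (\<sigma> m),
        \<sigma> (\<sigma> (\<alpha> m))) \<in> smoothing_links S"
      unfolding smoothing_links_def state_links_def using that by blast+
    then show ?thesis using R by simp
  qed
  show "h (\<sigma> (\<sigma> (\<alpha> m))) = h (\<sigma> m) \<and> h (\<sigma> (\<alpha> m)) = h
      (\<sigma> (\<sigma> m))" if "m \<in> Mt" "{m, \<alpha> m} \<notin> S" for m
  proof -
    have "(\<sigma> m, \<sigma> (\<sigma> (\<alpha> m))) \<in> smoothing_links S" "(\<sigma>
        (\<sigma> m), \<sigma> (\<alpha> m)) \<in> smoothing_links S"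
      unfolding smoothing_links_def state_links_def using that by blast+
    then show ?thesis using R by simp
  qed
qed



text \<open>The curves of colour \<open>i\<close>, as an edge set of the drawing: a matching edge belongs to it
  when exactly one of the two arcs produced by smoothing it has colour \<open>i\<close>.\<close>

definition colour_class :: "('d \<Rightarrow> nat) \<Rightarrow> nat \<Rightarrow> 'd set" where
  "colour_class h i = {x\<in>D. x \<notin> Mt \<and> h x = i} \<union> {m\<in>Mt. (h (\<sigma> m) =
      i) \<noteq> (h (\<sigma> (\<sigma> m)) = i)}"

lemma colour_class_subset: "colour_class h i \<subseteq> D"
  unfolding colour_class_def using matching_subset by blast

lemma colour_class_non_matching: "x \<in> D \<Longrightarrow> x \<notin> Mt \<Longrightarrow> x
    \<in> colour_class h i \<longleftrightarrow> h x = i"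
  unfolding colour_class_def by blast

lemma colour_class_matching: "m \<in> Mt \<Longrightarrow> m \<in> colour_class h i
    \<longleftrightarrow> (h (\<sigma> m) = i) \<noteq> (h (\<sigma> (\<sigma> m)) = i)"
  unfolding colour_class_def by blast

lemma colour_class_alpha:
  assumes r: "compatible S h" and x: "x \<in> D"
  shows "x \<in> colour_class h i \<longleftrightarrow> \<alpha> x \<in> colour_class h i"
proof (cases "x \<in> Mt")
  case True
  then have ax: "\<alpha> x \<in> Mt" using matching_alpha by blast
  have "(h (\<sigma> x) = i) \<noteq> (h (\<sigma> (\<sigma> x)) = i) \<longleftrightarrow> (h
      (\<sigma> (\<alpha> x)) = i) \<noteq> (h (\<sigma> (\<sigma> (\<alpha> x))) = i)"
  proof (cases "{x, \<alpha> x} \<in> S")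
    case True
    then show ?thesis using compatibleD(3)[OF r \<open>x \<in> Mt\<close>] by simp
  next
    case False
    then show ?thesis using compatibleD(4)[OF r \<open>x \<in> Mt\<close>] by auto
  qed
  then show ?thesis unfolding colour_class_matching[OF True] colour_class_matching[OF ax] .
next
  case False
  have ax: "\<alpha> x \<notin> Mt" "\<alpha> x \<in> D" using alpha_non_matching[OF x False]
      alpha_in[OF x] by auto
  show ?thesis unfolding colour_class_non_matching[OF x False] colour_class_non_matching[OF
      ax(2,1)] compatibleD(1)[OF r x False] by (rule refl)
qed

lemma card_Int_bit: "finite Ob \<Longrightarrow> (of_nat (card (W \<inter> Ob)) :: bit) =
    (\<Sum>y\<in>Ob. of_bool (y \<in> W))"
proof -
  assume f: "finite Ob"
  have "W \<inter> Ob = {y\<in>Ob. y \<in> W}" by blast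
  then show ?thesis using sum_of_bool_bit[OF f, of "\<lambda>y. y \<in> W"] by simp
qed

lemma colour_class_even:
  assumes r: "compatible S h" and x: "x \<in> D"
  shows "even (card (colour_class h i \<inter> vorbit \<sigma> x))"
proof -
  have fO: "finite (vorbit \<sigma> x)" using vorbit_finite[OF finite_darts bij_sigma x] .
  have "(\<Sum>y\<in>vorbit \<sigma> x. of_bool (y \<in> colour_class h i)) = (0::bit)"
  proof (cases "card (vorbit \<sigma> x) = 4")
    case True
    note o = crossing_orbit[OF x True]
    note c = crossing_dart[OF x True]
    have h2: "h (\<sigma> (\<sigma> x)) = h x" using compatibleD(2)[OF r x True] .
    have h3: "h (\<sigma> (\<sigma> (\<sigma> x))) = h (\<sigma> x)" using compatibleD(2)[OF r
        c(2,3)] .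
    have "(\<Sum>y\<in>vorbit \<sigma> x. of_bool (y \<in> colour_class h i)) =
      of_bool (x \<in> colour_class h i) + of_bool (\<sigma> x \<in> colour_class h i) + of_bool
          (\<sigma> (\<sigma> x) \<in> colour_class h i)
      + (of_bool (\<sigma> (\<sigma> (\<sigma> x)) \<in> colour_class h i) :: bit)"
      unfolding o(8) by (rule sum_quadruple) (use o in auto)
    also have "\<dots> = of_bool (h x = i) + of_bool (h (\<sigma> x) = i) + of_bool (h x = i) +
        of_bool (h (\<sigma> x) = i)"
      unfolding colour_class_non_matching[OF x c(1), of h i] colour_class_non_matching[OF c(2,4),
          of h i] colour_class_non_matching[OF c(5,7), of h i]
        colour_class_non_matching[OF c(8,10), of h i] h2 h3 by (rule refl)
    also have "\<dots> = 0"
      by (cases "h x = i"; cases "h (\<sigma> x) = i") simp_all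
    finally show ?thesis .
  next
    case False
    then have c3: "card (vorbit \<sigma> x) = 3" using vertex_or_crossing[OF x] by simp
    then have "vorbit \<sigma> x \<inter> Mt \<noteq> {}" using one_matching_dart_at_vertex[OF x]
        by auto
    then obtain m where m: "m \<in> vorbit \<sigma> x" "m \<in> Mt" by blast
    have eq: "vorbit \<sigma> x = {m, \<sigma> m, \<sigma> (\<sigma> m)}"
      using vorbit_mem(1)[OF x m(1)] matching_dart(10)[OF m(2)] by simp
    note p = matching_dart[OF m(2)]
    have "(\<Sum>y\<in>vorbit \<sigma> x. of_bool (y \<in> colour_class h i)) =
      of_bool (m \<in> colour_class h i) + of_bool (\<sigma> m \<in> colour_class h i) + (of_bool
          (\<sigma> (\<sigma> m) \<in> colour_class h i) :: bit)"
      unfolding eq by (rule sum_triple) (use p in auto)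
    also have "\<dots> = of_bool ((h (\<sigma> m) = i) \<noteq> (h (\<sigma> (\<sigma> m)) = i)) +
        of_bool (h (\<sigma> m) = i)
        + of_bool (h (\<sigma> (\<sigma> m)) = i)"
      unfolding colour_class_matching[OF m(2), of h i] colour_class_non_matching[OF p(2,4), of h i]
          colour_class_non_matching[OF p(3,5), of h i] by (rule refl)
    also have "\<dots> = 0"
      by (cases "h (\<sigma> m) = i"; cases "h (\<sigma> (\<sigma> m)) = i") simp_all
    finally show ?thesis .
  qed
  then have "(of_nat (card (colour_class h i \<inter> vorbit \<sigma> x)) :: bit) = 0" using
      card_Int_bit[OF fO] by simp
  then show ?thesis using of_nat_bit_eq_0_iff by blast
qed

lemma colour_class_face_coboundary:
  assumes r: "compatible S h"
  shows "\<exists>U. U \<subseteq> D \<and> (\<forall>x\<in>D. x \<in> U \<longleftrightarrow>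
      \<sigma> (\<alpha> x) \<in> U) \<and>
     (\<forall>x\<in>D. x \<in> colour_class h i \<longleftrightarrow> (x \<in> U) \<noteq>
         (\<alpha> x \<in> U))"
  by (rule even_subgraph_face_coboundary[OF euler colour_class_subset])
     (use colour_class_alpha[OF r] colour_class_even[OF r] in auto)


section \<open>Parity of colour changes at crossings\<close>

abbreviation crossings :: "'d set set" where "crossings \<equiv> vcrossings D \<sigma>"
abbreviation medges :: "'d set set" where "medges \<equiv> match_edges \<alpha> Mt"

lemma crossing_rep:
  assumes "Ob \<in> crossings"
  shows "rep Ob \<in> D" "card (vorbit \<sigma> (rep Ob)) = 4" "vorbit \<sigma> (rep Ob) = Ob"
proof -
  obtain d where d: "d \<in> D" "card (vorbit \<sigma> d) = 4" "Ob = vorbit \<sigma> d"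
    using assms unfolding vcrossings_def by blast
  have "d \<in> Ob" using d(3) by simp
  then have r: "rep Ob \<in> vorbit \<sigma> d" using rep_in[of d Ob] d(3) by simp
  have e: "vorbit \<sigma> (rep Ob) = vorbit \<sigma> d" using vorbit_mem(1)[OF d(1) r] .
  show "rep Ob \<in> D" using vorbit_mem(2)[OF d(1) r] .
  show "card (vorbit \<sigma> (rep Ob)) = 4" using e d(2) by simp
  show "vorbit \<sigma> (rep Ob) = Ob" using e d(3) by simp
qed

lemma medge_rep:
  assumes "e \<in> medges"
  shows "rep e \<in> Mt" "e = {rep e, \<alpha> (rep e)}" "rep e \<noteq> \<alpha> (rep e)"
proof -
  obtain m where m: "m \<in> Mt" "e = {m, \<alpha> m}" using assms unfolding match_edges_def by
      blast
  have mD: "m \<in> D" using matching_in[OF m(1)] .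
  have "rep e \<in> e" using rep_in[of m e] m(2) by simp
  then have c: "rep e = m \<or> rep e = \<alpha> m" using m(2) by simp
  have am: "\<alpha> m \<in> Mt" using matching_alpha[OF m(1)] .
  have aa: "\<alpha> (\<alpha> m) = m" using alpha_alpha[OF mD] .
  show r: "rep e \<in> Mt" using c m(1) am by (elim disjE) simp_all
  show "e = {rep e, \<alpha> (rep e)}"
  proof (cases "rep e = m")
    case True then show ?thesis using m(2) by simp
  next
    case False then have "rep e = \<alpha> m" using c by simp
    then show ?thesis using m(2) aa by (simp add: insert_commute)
  qed
  show "rep e \<noteq> \<alpha> (rep e)" using alpha_neq[OF matching_in[OF r]] by (rule not_sym)
qed

lemma finite_crossings: "finite crossings"
proof -
  have "crossings \<subseteq> vorbit \<sigma> ` D" unfolding vcrossings_def by blast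
  then show ?thesis using finite_darts finite_subset by blast
qed

lemma finite_matching: "finite Mt" using matching_subset finite_darts finite_subset by blast

lemma finite_medges: "finite medges" unfolding match_edges_def using finite_matching by simp

lemma Union_crossings: "\<Union>crossings = {x\<in>D. card (vorbit \<sigma> x) = 4}"
proof
  show "\<Union>crossings \<subseteq> {x\<in>D. card (vorbit \<sigma> x) = 4}"
  proof
    fix x assume "x \<in> \<Union>crossings"
    then obtain d where d: "d \<in> D" "card (vorbit \<sigma> d) = 4" "x \<in> vorbit \<sigma> d"
      unfolding vcrossings_def by blast
    then show "x \<in> {x\<in>D. card (vorbit \<sigma> x) = 4}" using vorbit_mem[OF d(1) d(3)] by
        simp
  qed
  show "{x\<in>D. card (vorbit \<sigma> x) = 4} \<subseteq> \<Union>crossings"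
  proof
    fix x assume "x \<in> {x\<in>D. card (vorbit \<sigma> x) = 4}"
    then have "vorbit \<sigma> x \<in> crossings" "x \<in> vorbit \<sigma> x" unfolding
        vcrossings_def by auto
    then show "x \<in> \<Union>crossings" by blast
  qed
qed

lemma crossings_disjoint: "Ob1 \<in> crossings \<Longrightarrow> Ob2 \<in> crossings
    \<Longrightarrow> Ob1 \<noteq> Ob2 \<Longrightarrow> Ob1 \<inter> Ob2 = {}"
  unfolding vcrossings_def using vorbit_disjoint[OF finite_darts bij_sigma] by blast

lemma Union_medges: "\<Union>medges = Mt"
  unfolding match_edges_def using matching_alpha by blast

lemma medges_disjoint:
  assumes "e1 \<in> medges" "e2 \<in> medges" "e1 \<noteq> e2"
  shows "e1 \<inter> e2 = {}"
proof (rule ccontr)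
  assume "e1 \<inter> e2 \<noteq> {}"
  then obtain z where z: "z \<in> e1" "z \<in> e2" by blast
  obtain m1 where m1: "m1 \<in> Mt" "e1 = {m1, \<alpha> m1}" using assms(1) unfolding
      match_edges_def by blast
  obtain m2 where m2: "m2 \<in> Mt" "e2 = {m2, \<alpha> m2}" using assms(2) unfolding
      match_edges_def by blast
  have i1: "\<alpha> (\<alpha> m1) = m1" using alpha_alpha matching_in m1(1) by blast
  have i2: "\<alpha> (\<alpha> m2) = m2" using alpha_alpha matching_in m2(1) by blast
  have z1: "z = m1 \<or> z = \<alpha> m1" using z(1) m1(2) by simp
  have z2: "z = m2 \<or> z = \<alpha> m2" using z(2) m2(2) by simp
  have "m1 = m2 \<or> m1 = \<alpha> m2"
  proof (cases "z = m1")
    case True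
    then show ?thesis using z2 by auto
  next
    case False
    then have zz: "z = \<alpha> m1" using z1 by simp
    then have "m1 = \<alpha> z" using i1 by simp
    then show ?thesis using z2 i2 by auto
  qed
  then have "e1 = e2" using m1(2) m2(2) i2 by (auto simp: insert_commute)
  then show False using assms(3) by simp
qed

lemma matching_neighbours_disjoint:
  assumes "m1 \<in> Mt" "m2 \<in> Mt" "m1 \<noteq> m2"
  shows "{\<sigma> m1, \<sigma> (\<sigma> m1)} \<inter> {\<sigma> m2, \<sigma> (\<sigma> m2)} = {}"
proof (rule ccontr)
  assume "{\<sigma> m1, \<sigma> (\<sigma> m1)} \<inter> {\<sigma> m2, \<sigma> (\<sigma> m2)}
      \<noteq> {}"
  then obtain z where z: "z \<in> {\<sigma> m1, \<sigma> (\<sigma> m1)}" "z \<in> {\<sigma> m2,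
      \<sigma> (\<sigma> m2)}" by blast
  have m1D: "m1 \<in> D" and m2D: "m2 \<in> D" using matching_in assms by auto
  have "z \<in> vorbit \<sigma> m1" using z(1) matching_dart(10)[OF assms(1)] by auto
  moreover have "z \<in> vorbit \<sigma> m2" using z(2) matching_dart(10)[OF assms(2)] by auto
  ultimately have "vorbit \<sigma> m1 = vorbit \<sigma> m2" using vorbit_mem(1)[OF m1D]
      vorbit_mem(1)[OF m2D] by metis
  then have "m2 \<in> vorbit \<sigma> m1" using vorbit_self[of m2 \<sigma>] by simp
  then have "m1 = m2" using matching_dart_unique[OF m1D matching_at_vertex[OF assms(1)] assms(1)
      vorbit_self assms(2)] by simp
  then show False using assms(3) by simp
qed

lemma sum_non_matching_darts:
  fixes F :: "'d \<Rightarrow> 'b::comm_monoid_add"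
  shows "(\<Sum>x\<in>D - Mt. F x) = (\<Sum>Ob\<in>crossings. \<Sum>x\<in>Ob. F x) +
      (\<Sum>e\<in>medges. \<Sum>m\<in>e. F (\<sigma> m) + F (\<sigma> (\<sigma> m)))"
proof -
  let ?Cx = "{x\<in>D. card (vorbit \<sigma> x) = 4}"
  let ?N3 = "\<Union>m\<in>Mt. {\<sigma> m, \<sigma> (\<sigma> m)}"
  have split: "D - Mt = ?Cx \<union> ?N3"
  proof
    show "D - Mt \<subseteq> ?Cx \<union> ?N3" using non_matching_dart_cases by blast
    show "?Cx \<union> ?N3 \<subseteq> D - Mt" using crossing_dart(1) matching_dart(2-5) by blast
  qed
  have disj: "?Cx \<inter> ?N3 = {}" using matching_dart(11,12) by fastforce
  have finC: "finite ?Cx" using finite_darts by simp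
  have finN: "finite ?N3" using finite_matching by simp
  have "(\<Sum>x\<in>D - Mt. F x) = (\<Sum>x\<in>?Cx. F x) + (\<Sum>x\<in>?N3. F x)"
    unfolding split by (rule sum.union_disjoint[OF finC finN disj])
  moreover have "(\<Sum>x\<in>?Cx. F x) = (\<Sum>Ob\<in>crossings. \<Sum>x\<in>Ob. F x)"
  proof -
    have "(\<Sum>x\<in>\<Union>crossings. F x) = (\<Sum>Ob\<in>crossings. \<Sum>x\<in>Ob. F x)"
    proof (subst sum.Union_disjoint)
      show "\<forall>A\<in>crossings. finite A" using vorbit_finite[OF finite_darts bij_sigma]
          unfolding vcrossings_def by blast
      show "\<forall>A\<in>crossings. \<forall>B\<in>crossings. A \<noteq> B \<longrightarrow> A
          \<inter> B = {}" using crossings_disjoint by blast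
    qed simp
    then show ?thesis unfolding Union_crossings .
  qed
  moreover have "(\<Sum>x\<in>?N3. F x) = (\<Sum>m\<in>Mt. F (\<sigma> m) + F (\<sigma> (\<sigma>
      m)))"
  proof -
    have "(\<Sum>x\<in>?N3. F x) = (\<Sum>m\<in>Mt. \<Sum>x\<in>{\<sigma> m, \<sigma> (\<sigma>
        m)}. F x)"
      by (rule sum.UNION_disjoint[OF finite_matching]) (use matching_neighbours_disjoint in auto)
    also have "\<dots> = (\<Sum>m\<in>Mt. F (\<sigma> m) + F (\<sigma> (\<sigma> m)))"
      by (rule sum.cong[OF refl], rule sum_pair, rule matching_dart(9))
    finally show ?thesis .
  qed
  moreover have "(\<Sum>m\<in>Mt. F (\<sigma> m) + F (\<sigma> (\<sigma> m))) =
      (\<Sum>e\<in>medges. \<Sum>m\<in>e. F (\<sigma> m) + F (\<sigma> (\<sigma> m)))"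
  proof -
    have "(\<Sum>m\<in>\<Union>medges. F (\<sigma> m) + F (\<sigma> (\<sigma> m))) =
        (\<Sum>e\<in>medges. \<Sum>m\<in>e. F (\<sigma> m) + F (\<sigma> (\<sigma> m)))"
    proof (subst sum.Union_disjoint)
      show "\<forall>A\<in>medges. finite A" unfolding match_edges_def by blast
      show "\<forall>A\<in>medges. \<forall>B\<in>medges. A \<noteq> B \<longrightarrow> A \<inter>
          B = {}" using medges_disjoint by blast
    qed simp
    then show ?thesis unfolding Union_medges .
  qed
  ultimately show ?thesis by simp
qed


lemma face_set_alpha:
  assumes Uc: "\<forall>x\<in>D. x \<in> U \<longleftrightarrow> \<sigma> (\<alpha> x) \<in> U" and
      y: "y \<in> D"
  shows "\<alpha> y \<in> U \<longleftrightarrow> \<sigma> y \<in> U"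
proof -
  have "\<alpha> y \<in> U \<longleftrightarrow> \<sigma> (\<alpha> (\<alpha> y)) \<in> U" using
      bspec[OF Uc alpha_in[OF y]] .
  then show ?thesis using alpha_alpha[OF y] by simp
qed

lemma face_set_boundary:
  assumes Uc: "\<forall>x\<in>D. x \<in> U \<longleftrightarrow> \<sigma> (\<alpha> x) \<in> U"
    and UW: "\<forall>x\<in>D. x \<in> colour_class h i \<longleftrightarrow> (x \<in> U) \<noteq>
        (\<alpha> x \<in> U)"
    and y: "y \<in> D" "y \<notin> Mt"
  shows "((y \<in> U) \<noteq> (\<sigma> y \<in> U)) = (h y = i)"
proof -
  have "y \<in> colour_class h i \<longleftrightarrow> (y \<in> U) \<noteq> (\<alpha> y \<in> U)"
      using bspec[OF UW y(1)] .
  then show ?thesis using colour_class_non_matching[OF y, of h i] face_set_alpha[OF Uc y(1)] by simp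
qed

lemma crossing_contribution:
  fixes h :: "'d \<Rightarrow> nat"
  assumes r: "compatible S h" and Uc: "\<forall>x\<in>D. x \<in> U \<longleftrightarrow> \<sigma>
      (\<alpha> x) \<in> U"
    and UW: "\<forall>x\<in>D. x \<in> colour_class h i \<longleftrightarrow> (x \<in> U) \<noteq>
        (\<alpha> x \<in> U)" and Ob: "Ob \<in> crossings"
  shows "(\<Sum>x\<in>Ob. of_bool (h x > i \<and> \<alpha> x \<in> U) :: bit) =
    of_bool (h (rep Ob) > i \<and> h (\<sigma> (rep Ob)) = i) + of_bool (h (\<sigma> (rep Ob)) > i
        \<and> h (rep Ob) = i)"
proof -
  define x where "x = rep Ob"
  have x: "x \<in> D" "card (vorbit \<sigma> x) = 4" "vorbit \<sigma> x = Ob" using crossing_rep[OF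
      Ob] unfolding x_def by auto
  note o = crossing_orbit[OF x(1,2)]
  note c = crossing_dart[OF x(1,2)]
  have h2: "h (\<sigma> (\<sigma> x)) = h x" using compatibleD(2)[OF r x(1,2)] .
  have h3: "h (\<sigma> (\<sigma> (\<sigma> x))) = h (\<sigma> x)" using compatibleD(2)[OF r
      c(2,3)] .
  have "(\<Sum>y\<in>Ob. of_bool (h y > i \<and> \<alpha> y \<in> U) :: bit) =
     of_bool (h x > i \<and> \<alpha> x \<in> U) + of_bool (h (\<sigma> x) > i \<and> \<alpha>
         (\<sigma> x) \<in> U)
     + of_bool (h (\<sigma> (\<sigma> x)) > i \<and> \<alpha> (\<sigma> (\<sigma> x)) \<in> U)
     + of_bool (h (\<sigma> (\<sigma> (\<sigma> x))) > i \<and> \<alpha> (\<sigma> (\<sigma>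
         (\<sigma> x))) \<in> U)"
    unfolding x(3)[symmetric] o(8) by (rule sum_quadruple) (use o in auto)
  also have "\<dots> = of_bool (h x > i \<and> \<sigma> x \<in> U) + of_bool (h (\<sigma> x) > i
      \<and> \<sigma> (\<sigma> x) \<in> U)
     + of_bool (h x > i \<and> \<sigma> (\<sigma> (\<sigma> x)) \<in> U) + of_bool (h (\<sigma> x)
         > i \<and> x \<in> U)"
    unfolding face_set_alpha[OF Uc x(1)] face_set_alpha[OF Uc c(2)] face_set_alpha[OF Uc c(5)]
        face_set_alpha[OF Uc c(8)] h2 h3 o(1) by (rule refl)
  also have "\<dots> = of_bool (h x > i \<and> h (\<sigma> x) = i) + of_bool (h (\<sigma> x) > i
      \<and> h x = i)"
  proof (rule bit_crossing_identity)
    show "((x \<in> U) \<noteq> (\<sigma> x \<in> U)) = (h x = i)" using face_set_boundary[OF Uc UW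
        x(1) c(1)] .
    show "((\<sigma> x \<in> U) \<noteq> (\<sigma> (\<sigma> x) \<in> U)) = (h (\<sigma> x) = i)"
        using face_set_boundary[OF Uc UW c(2,4)] .
    show "((\<sigma> (\<sigma> x) \<in> U) \<noteq> (\<sigma> (\<sigma> (\<sigma> x)) \<in> U)) =
        (h x = i)" using face_set_boundary[OF Uc UW c(5,7)] h2 by simp
    show "((\<sigma> (\<sigma> (\<sigma> x)) \<in> U) \<noteq> (x \<in> U)) = (h (\<sigma> x) = i)"
        using face_set_boundary[OF Uc UW c(8,10)] h3 o(1) by simp
  qed auto
  finally show ?thesis unfolding x_def .
qed

lemma medge_contribution:
  fixes h :: "'d \<Rightarrow> nat"
  assumes r: "compatible S h" and Uc: "\<forall>x\<in>D. x \<in> U \<longleftrightarrow> \<sigma>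
      (\<alpha> x) \<in> U"
    and UW: "\<forall>x\<in>D. x \<in> colour_class h i \<longleftrightarrow> (x \<in> U) \<noteq>
        (\<alpha> x \<in> U)" and e: "e \<in> medges"
  shows "(\<Sum>m\<in>e. of_bool (h (\<sigma> m) > i \<and> \<alpha> (\<sigma> m) \<in> U) +
      of_bool (h (\<sigma> (\<sigma> m)) > i \<and> \<alpha> (\<sigma> (\<sigma> m)) \<in> U) ::
          bit)
    = of_bool (e \<in> S) * (of_bool (h (\<sigma> (rep e)) > i \<and> h (\<sigma> (\<sigma> (rep
        e))) = i)
        + of_bool (h (\<sigma> (\<sigma> (rep e))) > i \<and> h (\<sigma> (rep e)) = i))"
proof -
  define m where "m = rep e"
  have m: "m \<in> Mt" "e = {m, \<alpha> m}" "m \<noteq> \<alpha> m" using medge_rep[OF e]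
      unfolding m_def by auto
  have am: "\<alpha> m \<in> Mt" using matching_alpha[OF m(1)] .
  note p = matching_dart[OF m(1)]
  note q = matching_dart[OF am]
  let ?G = "\<lambda>m. of_bool (h (\<sigma> m) > i \<and> \<alpha> (\<sigma> m) \<in> U) + of_bool
      (h (\<sigma> (\<sigma> m)) > i \<and> \<alpha> (\<sigma> (\<sigma> m)) \<in> U) :: bit"
  have "(\<Sum>m\<in>e. ?G m) = ?G m + ?G (\<alpha> m)" unfolding m(2) by (rule sum_pair) (rule
      m(3))
  also have "\<dots> = of_bool (h (\<sigma> m) > i \<and> \<sigma> (\<sigma> m) \<in> U) + of_bool
      (h (\<sigma> (\<sigma> m)) > i \<and> m \<in> U)
     + of_bool (h (\<sigma> (\<alpha> m)) > i \<and> \<sigma> (\<sigma> (\<alpha> m)) \<in> U) +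
         of_bool (h (\<sigma> (\<sigma> (\<alpha> m))) > i \<and> \<alpha> m \<in> U)"
    unfolding face_set_alpha[OF Uc p(2)] face_set_alpha[OF Uc p(3)] face_set_alpha[OF Uc q(2)]
        face_set_alpha[OF Uc q(3)] p(6) q(6)
    by (simp only: add.assoc)
  also have "\<dots> = of_bool (e \<in> S) * (of_bool (h (\<sigma> m) > i \<and> h (\<sigma>
      (\<sigma> m)) = i)
        + of_bool (h (\<sigma> (\<sigma> m)) > i \<and> h (\<sigma> m) = i))"
  proof -
    have w1: "((\<sigma> m \<in> U) \<noteq> (\<sigma> (\<sigma> m) \<in> U)) = (h (\<sigma> m) =
        i)" using face_set_boundary[OF Uc UW p(2,4)] .
    have w2: "((\<sigma> (\<sigma> m) \<in> U) \<noteq> (m \<in> U)) = (h (\<sigma> (\<sigma> m)) =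
        i)" using face_set_boundary[OF Uc UW p(3,5)] p(6) by simp
    have w0: "((m \<in> U) \<noteq> (\<alpha> m \<in> U)) = ((h (\<sigma> m) = i) \<noteq> (h
        (\<sigma> (\<sigma> m)) = i))"
      using bspec[OF UW p(1)] colour_class_matching[OF m(1), of h i] by simp
    have w3: "((\<sigma> (\<alpha> m) \<in> U) \<noteq> (\<sigma> (\<sigma> (\<alpha> m)) \<in> U))
        = (h (\<sigma> (\<alpha> m)) = i)" using face_set_boundary[OF Uc UW q(2,4)] .
    have w4: "((\<sigma> (\<sigma> (\<alpha> m)) \<in> U) \<noteq> (\<alpha> m \<in> U)) = (h
        (\<sigma> (\<sigma> (\<alpha> m))) = i)" using face_set_boundary[OF Uc UW q(3,5)] q(6) by
            simp
    show ?thesis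
    proof (cases "e \<in> S")
      case True
      then have "{m, \<alpha> m} \<in> S" using m(2) by simp
      then have hh: "h (\<sigma> (\<alpha> m)) = h (\<sigma> m)" "h (\<sigma> (\<sigma> (\<alpha>
          m))) = h (\<sigma> (\<sigma> m))" using compatibleD(3)[OF r m(1)] by auto
      have "of_bool (h (\<sigma> m) > i \<and> \<sigma> (\<sigma> m) \<in> U) + of_bool (h
          (\<sigma> (\<sigma> m)) > i \<and> m \<in> U)
        + of_bool (h (\<sigma> m) > i \<and> \<sigma> (\<sigma> (\<alpha> m)) \<in> U) + of_bool (h
            (\<sigma> (\<sigma> m)) > i \<and> \<alpha> m \<in> U)
        = (of_bool (h (\<sigma> m) > i \<and> h (\<sigma> (\<sigma> m)) = i) + of_bool (h (\<sigma>
            (\<sigma> m)) > i \<and> h (\<sigma> m) = i) :: bit)"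
        by (rule bit_one_smoothing_identity[OF w1 w2 w0 w3[unfolded hh] w4[unfolded hh]]) auto
      then show ?thesis using True unfolding hh by simp
    next
      case False
      then have "{m, \<alpha> m} \<notin> S" using m(2) by simp
      then have hh: "h (\<sigma> (\<sigma> (\<alpha> m))) = h (\<sigma> m)" "h (\<sigma> (\<alpha>
          m)) = h (\<sigma> (\<sigma> m))" using compatibleD(4)[OF r m(1)] by auto
      have "of_bool (h (\<sigma> m) > i \<and> \<sigma> (\<sigma> m) \<in> U) + of_bool (h
          (\<sigma> (\<sigma> m)) > i \<and> m \<in> U)
        + of_bool (h (\<sigma> (\<sigma> m)) > i \<and> \<sigma> (\<sigma> (\<alpha> m)) \<in> U) +
            of_bool (h (\<sigma> m) > i \<and> \<alpha> m \<in> U)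
        = (0 :: bit)"
        by (rule bit_zero_smoothing_identity[OF w1 w2 w0 w3[unfolded hh] w4[unfolded hh]]) auto
      then show ?thesis using False unfolding hh by simp
    qed
  qed
  finally show ?thesis unfolding m_def .
qed

lemma sum_colour_boundary_zero:
  fixes h :: "'d \<Rightarrow> nat"
  assumes r: "compatible S h" and Uc: "\<forall>x\<in>D. x \<in> U \<longleftrightarrow> \<sigma>
      (\<alpha> x) \<in> U"
    and UW: "\<forall>x\<in>D. x \<in> colour_class h i \<longleftrightarrow> (x \<in> U) \<noteq>
        (\<alpha> x \<in> U)"
  shows "(\<Sum>x\<in>D - Mt. of_bool (h x > i \<and> \<alpha> x \<in> U) :: bit) = 0"
proof -
  let ?P = "{x\<in>D - Mt. h x > i \<and> \<alpha> x \<in> U}"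
  have "even (card ?P)"
  proof (rule even_card_fixpoint_free_involution[where f=\<alpha>])
    show "finite ?P" using finite_darts by simp
    show "\<forall>x\<in>?P. \<alpha> x \<in> ?P \<and> \<alpha> (\<alpha> x) = x \<and> \<alpha> x
        \<noteq> x"
    proof
      fix x assume x: "x \<in> ?P"
      then have xD: "x \<in> D" and xM: "x \<notin> Mt" and hx: "h x > i" and ax: "\<alpha> x \<in>
          U" by auto
      have axD: "\<alpha> x \<in> D" "\<alpha> x \<notin> Mt" using alpha_in[OF xD]
          alpha_non_matching[OF xD xM] by auto
      have "x \<notin> colour_class h i" using colour_class_non_matching[OF xD xM, of h i] hx by
          simp
      then have "x \<in> U" using bspec[OF UW xD] ax by simp
      moreover have "h (\<alpha> x) = h x" using compatibleD(1)[OF r xD xM] .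
      ultimately have "\<alpha> x \<in> ?P" using axD hx alpha_alpha[OF xD] by simp
      then show "\<alpha> x \<in> ?P \<and> \<alpha> (\<alpha> x) = x \<and> \<alpha> x \<noteq> x"
          using alpha_alpha[OF xD] alpha_neq[OF xD] by simp
    qed
  qed
  then have "(of_nat (card ?P) :: bit) = 0" using of_nat_bit_eq_0_iff by blast
  then show ?thesis using sum_of_bool_bit[of "D - Mt" "\<lambda>x. h x > i \<and> \<alpha> x \<in>
      U"] finite_darts by simp
qed

text \<open>The curves of colour \<open>i\<close> bound a set \<open>U\<close> of faces. A segment of larger colour does
  not separate \<open>U\<close> from its complement, so the darts of larger colour whose opposite dart lies
  in \<open>U\<close> come in pairs. Counting them around each crossing and each matching edge shows that,
  modulo 2, the curves of colour \<open>i\<close> change sides with curves of larger colour as often at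
  crossings as at 1-smoothed matching edges.\<close>

lemma colour_parity:
  fixes h :: "'d \<Rightarrow> nat"
  assumes r: "compatible S h"
  shows "(\<Sum>Ob\<in>crossings. of_bool (h (rep Ob) > i \<and> h (\<sigma> (rep Ob)) = i) +
      of_bool (h (\<sigma> (rep Ob)) > i \<and> h (rep Ob) = i))
    + (\<Sum>e\<in>medges. of_bool (e \<in> S) * (of_bool (h (\<sigma> (rep e)) > i \<and> h
        (\<sigma> (\<sigma> (rep e))) = i)
        + of_bool (h (\<sigma> (\<sigma> (rep e))) > i \<and> h (\<sigma> (rep e)) = i))) =
            (0::bit)"
proof -
  obtain U where U: "U \<subseteq> D" "\<forall>x\<in>D. x \<in> U \<longleftrightarrow> \<sigma>
      (\<alpha> x) \<in> U"
    "\<forall>x\<in>D. x \<in> colour_class h i \<longleftrightarrow> (x \<in> U) \<noteq>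
        (\<alpha> x \<in> U)"
    using colour_class_face_coboundary[OF r, of i] by blast
  let ?F = "\<lambda>x. of_bool (h x > i \<and> \<alpha> x \<in> U) :: bit"
  have "0 = (\<Sum>x\<in>D - Mt. ?F x)" using sum_colour_boundary_zero[OF r U(2,3)] by simp
  also have "\<dots> = (\<Sum>Ob\<in>crossings. \<Sum>x\<in>Ob. ?F x) + (\<Sum>e\<in>medges.
      \<Sum>m\<in>e. ?F (\<sigma> m) + ?F (\<sigma> (\<sigma> m)))"
    by (rule sum_non_matching_darts)
  also have "(\<Sum>Ob\<in>crossings. \<Sum>x\<in>Ob. ?F x) = (\<Sum>Ob\<in>crossings. of_bool (h
      (rep Ob) > i \<and> h (\<sigma> (rep Ob)) = i) + of_bool (h (\<sigma> (rep Ob)) > i \<and> h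
          (rep Ob) = i))"
    by (rule sum.cong[OF refl]) (rule crossing_contribution[OF r U(2,3)])
  also have "(\<Sum>e\<in>medges. \<Sum>m\<in>e. ?F (\<sigma> m) + ?F (\<sigma> (\<sigma> m))) =
      (\<Sum>e\<in>medges. of_bool (e \<in> S) * (of_bool (h (\<sigma> (rep e)) > i \<and> h
          (\<sigma> (\<sigma> (rep e))) = i)
        + of_bool (h (\<sigma> (\<sigma> (rep e))) > i \<and> h (\<sigma> (rep e)) = i)))"
    by (rule sum.cong[OF refl]) (rule medge_contribution[OF r U(2,3)])
  finally show ?thesis by simp
qed


lemma crossing_strands_differ:
  fixes h :: "'d \<Rightarrow> nat"
  assumes r: "compatible S h" and Ob: "Ob \<in> crossings"
  shows "(\<exists>d\<in>Ob. h d \<noteq> h (\<sigma> d)) \<longleftrightarrow> h (rep Ob) \<noteq>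
      h (\<sigma> (rep Ob))"
proof -
  define x where "x = rep Ob"
  have x: "x \<in> D" "card (vorbit \<sigma> x) = 4" "vorbit \<sigma> x = Ob" using crossing_rep[OF
      Ob] unfolding x_def by auto
  note o = crossing_orbit[OF x(1,2)]
  note c = crossing_dart[OF x(1,2)]
  have h2: "h (\<sigma> (\<sigma> x)) = h x" using compatibleD(2)[OF r x(1,2)] .
  have h3: "h (\<sigma> (\<sigma> (\<sigma> x))) = h (\<sigma> x)" using compatibleD(2)[OF r
      c(2,3)] .
  have Obe: "Ob = {x, \<sigma> x, \<sigma> (\<sigma> x), \<sigma> (\<sigma> (\<sigma> x))}" using
      x(3) o(8) by simp
  have "(\<exists>d\<in>Ob. h d \<noteq> h (\<sigma> d)) \<longleftrightarrow> h x \<noteq> h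
      (\<sigma> x)"
  proof
    assume "\<exists>d\<in>Ob. h d \<noteq> h (\<sigma> d)"
    then obtain d where d: "d \<in> Ob" "h d \<noteq> h (\<sigma> d)" by blast
    have "d = x \<or> d = \<sigma> x \<or> d = \<sigma> (\<sigma> x) \<or> d = \<sigma> (\<sigma>
        (\<sigma> x))" using d(1) Obe by simp
    then show "h x \<noteq> h (\<sigma> x)"
    proof (elim disjE)
      assume "d = x" then show ?thesis using d(2) by simp
    next
      assume "d = \<sigma> x" then show ?thesis using d(2) h2 by simp
    next
      assume "d = \<sigma> (\<sigma> x)" then show ?thesis using d(2) h2 h3 by simp
    next
      assume "d = \<sigma> (\<sigma> (\<sigma> x))" then show ?thesis using d(2) h3 o(1) by simp
    qed
  next
    assume "h x \<noteq> h (\<sigma> x)"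
    moreover have "x \<in> Ob" using Obe by simp
    ultimately show "\<exists>d\<in>Ob. h d \<noteq> h (\<sigma> d)" by blast
  qed
  then show ?thesis unfolding x_def .
qed

lemma medge_arcs_differ:
  fixes h :: "'d \<Rightarrow> nat"
  assumes r: "compatible S h" and e: "e \<in> medges" and eS: "e \<in> S"
  shows "(\<exists>m\<in>e. h (\<sigma> m) \<noteq> h (\<sigma> (\<sigma> m)))
      \<longleftrightarrow> h (\<sigma> (rep e)) \<noteq> h (\<sigma> (\<sigma> (rep e)))"
proof -
  define m where "m = rep e"
  have m: "m \<in> Mt" "e = {m, \<alpha> m}" "m \<noteq> \<alpha> m" using medge_rep[OF e]
      unfolding m_def by auto
  have "{m, \<alpha> m} \<in> S" using eS m(2) by simp
  then have hh: "h (\<sigma> (\<alpha> m)) = h (\<sigma> m)" "h (\<sigma> (\<sigma> (\<alpha> m)))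
      = h (\<sigma> (\<sigma> m))"
    using compatibleD(3)[OF r m(1)] by auto
  have "(\<exists>m'\<in>e. h (\<sigma> m') \<noteq> h (\<sigma> (\<sigma> m')))
      \<longleftrightarrow> h (\<sigma> m) \<noteq> h (\<sigma> (\<sigma> m))"
    unfolding m(2) using hh by auto
  then show ?thesis unfolding m_def .
qed


theorem crossing_parity:
  fixes h :: "'d \<Rightarrow> nat"
  assumes r: "compatible S h" and S: "S \<subseteq> medges"
  shows "even (card {Ob\<in>crossings. \<exists>d\<in>Ob. h d \<noteq> h (\<sigma> d)} + card
      {e\<in>S. \<exists>m\<in>e. h (\<sigma> m) \<noteq> h (\<sigma> (\<sigma> m))})"
proof -
  define I where "I = h ` (D - Mt)"
  have fI: "finite I" unfolding I_def using finite_darts by simp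
  define cx where "cx i Ob = (of_bool (h (rep Ob) > i \<and> h (\<sigma> (rep Ob)) = i) + of_bool
      (h (\<sigma> (rep Ob)) > i \<and> h (rep Ob) = i) :: bit)" for i Ob
  define ce where "ce i e = (of_bool (e \<in> S) * (of_bool (h (\<sigma> (rep e)) > i \<and> h
      (\<sigma> (\<sigma> (rep e))) = i)
        + of_bool (h (\<sigma> (\<sigma> (rep e))) > i \<and> h (\<sigma> (rep e)) = i)) :: bit)"
            for i e
  have z: "(\<Sum>Ob\<in>crossings. cx i Ob) + (\<Sum>e\<in>medges. ce i e) = 0" for i
    unfolding cx_def ce_def by (rule colour_parity[OF r])
  have "(\<Sum>i\<in>I. (\<Sum>Ob\<in>crossings. cx i Ob) + (\<Sum>e\<in>medges. ce i e)) = 0"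
    using z by simp
  then have "(\<Sum>i\<in>I. \<Sum>Ob\<in>crossings. cx i Ob) + (\<Sum>i\<in>I. \<Sum>e\<in>medges.
      ce i e) = 0"
    by (simp only: sum.distrib)
  then have Z: "(\<Sum>Ob\<in>crossings. \<Sum>i\<in>I. cx i Ob) + (\<Sum>e\<in>medges.
      \<Sum>i\<in>I. ce i e) = 0"
    by (simp only: sum.swap[of _ I])
  have A: "(\<Sum>i\<in>I. cx i Ob) = of_bool (h (rep Ob) \<noteq> h (\<sigma> (rep Ob)))" if Ob:
      "Ob \<in> crossings" for Ob
  proof -
    have x: "rep Ob \<in> D" "card (vorbit \<sigma> (rep Ob)) = 4" using crossing_rep[OF Ob] by auto
    then have ab: "h (rep Ob) \<in> I" "h (\<sigma> (rep Ob)) \<in> I"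
      unfolding I_def using crossing_dart[OF x] by blast+
    show ?thesis unfolding cx_def by (rule sum_colour_split[OF fI ab])
  qed
  have B: "(\<Sum>i\<in>I. ce i e) = of_bool (e \<in> S \<and> h (\<sigma> (rep e)) \<noteq> h
      (\<sigma> (\<sigma> (rep e))))" if e: "e \<in> medges" for e
  proof -
    have "rep e \<in> Mt" using medge_rep[OF e] by simp
    then have ab: "h (\<sigma> (rep e)) \<in> I" "h (\<sigma> (\<sigma> (rep e))) \<in> I"
      unfolding I_def using matching_dart by blast+
    show ?thesis unfolding ce_def sum_distrib_left[symmetric] sum_colour_split[OF fI ab] by simp
  qed
  have "(\<Sum>Ob\<in>crossings. of_bool (h (rep Ob) \<noteq> h (\<sigma> (rep Ob)))) +
      (\<Sum>e\<in>medges. of_bool (e \<in> S \<and> h (\<sigma> (rep e)) \<noteq> h (\<sigma>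
          (\<sigma> (rep e))))) = (0::bit)"
    using Z A B by simp
  then have "of_nat (card {Ob\<in>crossings. h (rep Ob) \<noteq> h (\<sigma> (rep Ob))})
      + of_nat (card {e\<in>medges. e \<in> S \<and> h (\<sigma> (rep e)) \<noteq> h (\<sigma>
          (\<sigma> (rep e)))}) = (0::bit)"
    unfolding sum_of_bool_bit[OF finite_crossings] sum_of_bool_bit[OF finite_medges] .
  moreover have "{Ob\<in>crossings. h (rep Ob) \<noteq> h (\<sigma> (rep Ob))} = {Ob\<in>crossings.
      \<exists>d\<in>Ob. h d \<noteq> h (\<sigma> d)}"
    using crossing_strands_differ[OF r] by blast
  moreover have "{e\<in>medges. e \<in> S \<and> h (\<sigma> (rep e)) \<noteq> h (\<sigma>
      (\<sigma> (rep e)))} = {e\<in>S. \<exists>m\<in>e. h (\<sigma> m) \<noteq> h (\<sigma>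
          (\<sigma> m))}"
    using medge_arcs_differ[OF r] S by blast
  ultimately have "(of_nat (card {Ob\<in>crossings. \<exists>d\<in>Ob. h d \<noteq> h (\<sigma> d)}
      + card {e\<in>S. \<exists>m\<in>e. h (\<sigma> m) \<noteq> h (\<sigma> (\<sigma> m))}) ::
          bit) = 0"
    by simp
  then show ?thesis using of_nat_bit_eq_0_iff by blast
qed

end

section \<open>Both brackets count perfect matching colourings\<close>

lemma prod_of_bool:
  assumes "finite A"
  shows "(\<Prod>x\<in>A. (of_bool (P x) :: 'a::comm_semiring_1)) = of_bool (\<forall>x\<in>A. P x)"
  using assms by (induction rule: finite_induct) auto

lemma prod_sign:
  assumes "finite A"
  shows "(\<Prod>x\<in>A. (if P x then 1 else -1 :: int)) = (-1) ^ card {x\<in>A. \<not> P x}"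
  using assms
proof (induction rule: finite_induct)
  case empty then show ?case by simp
next
  case (insert a A)
  have e: "{x\<in>insert a A. \<not> P x} = (if P a then {x\<in>A. \<not> P x} else insert a
      {x\<in>A. \<not> P x})" by auto
  have "a \<notin> {x\<in>A. \<not> P x}" using insert.hyps by simp
  moreover have "finite {x\<in>A. \<not> P x}" using insert.hyps by simp
  ultimately show ?case using insert e by (simp add: card_insert_if)
qed

lemma sum_of_bool_int:
  assumes "finite A"
  shows "(\<Sum>x\<in>A. (of_bool (P x) :: int)) = int (card {x\<in>A. P x})"
proof -
  have "(\<Sum>x\<in>A. (of_bool (P x) :: int)) = (\<Sum>x\<in>A. if P x then 1 else 0)" by (simp
      add: of_bool_def)
  also have "\<dots> = (\<Sum>x\<in>{x\<in>A. P x}. 1)" using sum.inter_filter[OF assms, of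
      "\<lambda>_. (1::int)" P] by simp
  finally show ?thesis by simp
qed

lemma minus_one_power_even_add:
  assumes "even (a + b)"
  shows "((-1::int) ^ a) = (-1) ^ b"
proof -
  have "even a \<longleftrightarrow> even b" using assms by simp
  then show ?thesis by (simp add: minus_one_power_iff)
qed

context matching_diagram
begin

abbreviation NM :: "'d set" where "NM \<equiv> nm_darts D Mt"

lemma NM_eq: "NM = D - Mt" unfolding nm_darts_def ..

definition node_links :: "'d set set \<Rightarrow> ('d \<times> 'd) set" where
  "node_links T = {(d, \<sigma> d) | d. d \<in> D \<and> vorbit \<sigma> d \<in> T}"

lemma state_links_split: "state_links D \<alpha> \<sigma> Mt S T = smoothing_links S \<union>
    node_links T"
  unfolding smoothing_links_def state_links_def node_links_def by blast

lemma smoothing_links_cases: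
  assumes "(x,y) \<in> smoothing_links S"
  obtains (a) d where "x = d" "y = \<alpha> d" "d \<in> D" "d \<notin> Mt"
      | (c) d where "x = d" "y = \<sigma> (\<sigma> d)" "d \<in> D" "card (vorbit \<sigma> d) = 4"
      | (s1) m where "x = \<sigma> m" "y = \<sigma> (\<alpha> m)" "m \<in> Mt" "{m, \<alpha> m}
          \<in> S"
      | (s2) m where "x = \<sigma> (\<sigma> m)" "y = \<sigma> (\<sigma> (\<alpha> m))" "m \<in>
          Mt" "{m, \<alpha> m} \<in> S"
      | (z1) m where "x = \<sigma> m" "y = \<sigma> (\<sigma> (\<alpha> m))" "m \<in> Mt" "{m,
          \<alpha> m} \<notin> S"
      | (z2) m where "x = \<sigma> (\<sigma> m)" "y = \<sigma> (\<alpha> m)" "m \<in> Mt" "{m,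
          \<alpha> m} \<notin> S"
  using assms unfolding smoothing_links_def state_links_def nm_darts_def by blast

lemma smoothing_links_subset: "smoothing_links S \<subseteq> NM \<times> NM"
proof (rule subsetI)
  fix p assume p: "p \<in> smoothing_links S"
  obtain x y where xy: "p = (x,y)" by (cases p)
  have "x \<in> D - Mt \<and> y \<in> D - Mt" using p unfolding xy
  proof (cases rule: smoothing_links_cases)
    case (a d) then show ?thesis using alpha_in alpha_non_matching by blast
  next
    case (c d) then show ?thesis using crossing_dart[of d] by blast
  next
    case (s1 m) then show ?thesis using matching_dart[of m] matching_dart[of "\<alpha> m"]
        matching_alpha[of m] by blast
  next
    case (s2 m) then show ?thesis using matching_dart[of m] matching_dart[of "\<alpha> m"]
        matching_alpha[of m] by blast
  next
    case (z1 m) then show ?thesis using matching_dart[of m] matching_dart[of "\<alpha> m"]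
        matching_alpha[of m] by blast
  next
    case (z2 m) then show ?thesis using matching_dart[of m] matching_dart[of "\<alpha> m"]
        matching_alpha[of m] by blast
  qed
  then show "p \<in> NM \<times> NM" unfolding xy NM_eq by blast
qed

lemma node_links_subset: "T \<subseteq> crossings \<Longrightarrow> node_links T \<subseteq> NM
    \<times> NM"
proof
  fix p assume T: "T \<subseteq> crossings" and p: "p \<in> node_links T"
  then obtain d where d: "p = (d, \<sigma> d)" "d \<in> D" "vorbit \<sigma> d \<in> T" unfolding
      node_links_def by blast
  have "card (vorbit \<sigma> d) = 4" using crossing_rep(2,3) T d(3) by (metis subsetD)
  then show "p \<in> NM \<times> NM" using crossing_dart[OF d(2)] d(1,2) unfolding NM_eq by blast
qed

lemma compatible_iff:
  fixes h :: "'d \<Rightarrow> nat"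
  shows "compatible S h \<longleftrightarrow>
    ((\<forall>d\<in>D. d \<notin> Mt \<longrightarrow> h (\<alpha> d) = h d) \<and>
        (\<forall>d\<in>D. card (vorbit \<sigma> d) = 4 \<longrightarrow> h (\<sigma> (\<sigma> d))
            = h d)
     \<and> (\<forall>m\<in>Mt. {m, \<alpha> m} \<in> S \<longrightarrow> h (\<sigma> (\<alpha> m))
         = h (\<sigma> m) \<and> h (\<sigma> (\<sigma> (\<alpha> m))) = h (\<sigma> (\<sigma> m)))
     \<and> (\<forall>m\<in>Mt. {m, \<alpha> m} \<notin> S \<longrightarrow> h (\<sigma> (\<sigma>
         (\<alpha> m))) = h (\<sigma> m) \<and> h (\<sigma> (\<alpha> m)) = h (\<sigma> (\<sigma>
             m))))"
  (is "_ \<longleftrightarrow> ?B")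
proof
  assume "compatible S h"
  then show ?B using compatibleD[of S h] by blast
next
  assume B: ?B
  show "compatible S h" unfolding compatible_def
  proof (clarify)
    fix x y assume "(x,y) \<in> smoothing_links S"
    then show "h x = h y"
    proof (cases rule: smoothing_links_cases)
      case a then show ?thesis using B by simp
    next
      case c then show ?thesis using B by simp
    next
      case s1 then show ?thesis using B by simp
    next
      case s2 then show ?thesis using B by simp
    next
      case z1 then show ?thesis using B by simp
    next
      case z2 then show ?thesis using B by simp
    qed
  qed
qed

end

lemma minus_one_power_card_split:
  assumes "finite S"
  shows "(-1::int) ^ card S * (-1) ^ card {e\<in>S. P e} = (-1) ^ card {e\<in>S. \<not> P e}"
proof -
  have "S = {e\<in>S. P e} \<union> {e\<in>S. \<not> P e}" by blast
  then have "card S = card {e\<in>S. P e} + card {e\<in>S. \<not> P e}"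
    using assms by (metis (no_types, lifting) card_Un_disjoint disjoint_iff finite_Un
        mem_Collect_eq)
  then have ex: "card S + card {e\<in>S. P e} = card {e\<in>S. \<not> P e} + 2 * card {e\<in>S. P
      e}" by simp
  have "(-1::int) ^ card S * (-1) ^ card {e\<in>S. P e} = (-1) ^ (card S + card {e\<in>S. P e})"
    by (simp add: power_add)
  also have "\<dots> = (-1) ^ (card {e\<in>S. \<not> P e} + 2 * card {e\<in>S. P e})" unfolding ex
      ..
  also have "\<dots> = (-1) ^ card {e\<in>S. \<not> P e}" by (simp add: power_add power_mult)
  finally show ?thesis .
qed

context matching_diagram
begin

definition strands_agree :: "('d \<Rightarrow> nat) \<Rightarrow> 'd set \<Rightarrow> bool" where
  "strands_agree h Ob \<longleftrightarrow> (\<forall>d\<in>Ob. h d = h (\<sigma> d))"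
definition base_compatible :: "('d \<Rightarrow> nat) \<Rightarrow> bool" where
  "base_compatible h \<longleftrightarrow> (\<forall>d\<in>D. d \<notin> Mt \<longrightarrow> h
      (\<alpha> d) = h d) \<and> (\<forall>d\<in>D. card (vorbit \<sigma> d) = 4 \<longrightarrow>
          h (\<sigma> (\<sigma> d)) = h d)"
definition fits_one :: "'d set \<Rightarrow> ('d \<Rightarrow> nat) \<Rightarrow> bool" where
  "fits_one e h \<longleftrightarrow> (\<forall>m\<in>e. h (\<sigma> (\<alpha> m)) = h (\<sigma> m)
      \<and> h (\<sigma> (\<sigma> (\<alpha> m))) = h (\<sigma> (\<sigma> m)))"
definition fits_zero :: "'d set \<Rightarrow> ('d \<Rightarrow> nat) \<Rightarrow> bool" where
  "fits_zero e h \<longleftrightarrow> (\<forall>m\<in>e. h (\<sigma> (\<sigma> (\<alpha> m))) = h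
      (\<sigma> m) \<and> h (\<sigma> (\<alpha> m)) = h (\<sigma> (\<sigma> m)))"
definition bicoloured :: "'d set \<Rightarrow> ('d \<Rightarrow> nat) \<Rightarrow> bool" where
  "bicoloured e h \<longleftrightarrow> (\<exists>m\<in>e. h (\<sigma> m) \<noteq> h (\<sigma>
      (\<sigma> m)))"

lemma medge_mem:
  assumes "e \<in> medges" "m \<in> e"
  shows "m \<in> Mt" "{m, \<alpha> m} = e"
proof -
  obtain r where r: "r \<in> Mt" "e = {r, \<alpha> r}" using assms(1) unfolding match_edges_def by
      blast
  have ar: "\<alpha> r \<in> Mt" "\<alpha> (\<alpha> r) = r" using matching_alpha[OF r(1)]
      alpha_alpha[OF matching_in[OF r(1)]] by auto
  have "m = r \<or> m = \<alpha> r" using assms(2) r(2) by simp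
  then show "m \<in> Mt" "{m, \<alpha> m} = e" using r ar by (auto simp: insert_commute)
qed

lemma compatible_nodes:
  fixes h :: "'d \<Rightarrow> nat"
  assumes T: "T \<subseteq> crossings"
  shows "(\<forall>(x,y)\<in>state_links D \<alpha> \<sigma> Mt S T. h x = h y)
      \<longleftrightarrow> compatible S h \<and> (\<forall>Ob\<in>T. strands_agree h Ob)"
proof -
  have "(\<forall>(x,y)\<in>node_links T. h x = h y) \<longleftrightarrow> (\<forall>Ob\<in>T.
      strands_agree h Ob)"
  proof
    assume H: "\<forall>(x,y)\<in>node_links T. h x = h y"
    show "\<forall>Ob\<in>T. strands_agree h Ob" unfolding strands_agree_def
    proof (intro ballI)
      fix Ob d assume Ob: "Ob \<in> T" and d: "d \<in> Ob"
      have ObX: "Ob \<in> crossings" using Ob T by blast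
      have r: "rep Ob \<in> D" "vorbit \<sigma> (rep Ob) = Ob" using crossing_rep[OF ObX] by auto
      have dv: "d \<in> vorbit \<sigma> (rep Ob)" using d r(2) by simp
      have "d \<in> D" "vorbit \<sigma> d = Ob" using vorbit_mem[OF r(1) dv] r(2) by auto
      then have "(d, \<sigma> d) \<in> node_links T" unfolding node_links_def using Ob by blast
      then show "h d = h (\<sigma> d)" using H by blast
    qed
  next
    assume H: "\<forall>Ob\<in>T. strands_agree h Ob"
    show "\<forall>(x,y)\<in>node_links T. h x = h y"
    proof (clarify)
      fix x y assume "(x,y) \<in> node_links T"
      then obtain d where d: "x = d" "y = \<sigma> d" "d \<in> D" "vorbit \<sigma> d \<in> T"
          unfolding node_links_def by blast
      have "strands_agree h (vorbit \<sigma> d)" using H d(4) by blast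
      then show "h x = h y" unfolding strands_agree_def using d vorbit_self[of d \<sigma>] by blast
    qed
  qed
  moreover have "(\<forall>(x,y)\<in>state_links D \<alpha> \<sigma> Mt S T. h x = h y)
      \<longleftrightarrow> compatible S h \<and> (\<forall>(x,y)\<in>node_links T. h x = h y)"
    unfolding state_links_split compatible_def by blast
  ultimately show ?thesis by simp
qed

lemma compatible_state_iff:
  fixes h :: "'d \<Rightarrow> nat"
  assumes S: "S \<subseteq> medges"
  shows "compatible S h \<longleftrightarrow>
    base_compatible h \<and> (\<forall>e\<in>S. fits_one e h) \<and> (\<forall>e\<in>medges - S.
        fits_zero e h)"
proof -
  have one: "(\<forall>m\<in>Mt. {m, \<alpha> m} \<in> S \<longrightarrow> P m)
      \<longleftrightarrow> (\<forall>e\<in>S. \<forall>m\<in>e. P m)" for P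
  proof
    assume H: "\<forall>m\<in>Mt. {m, \<alpha> m} \<in> S \<longrightarrow> P m"
    show "\<forall>e\<in>S. \<forall>m\<in>e. P m"
    proof (intro ballI)
      fix e m assume "e \<in> S" "m \<in> e"
      then have "m \<in> Mt" "{m, \<alpha> m} = e" using medge_mem S by blast+
      then show "P m" using H \<open>e \<in> S\<close> by blast
    qed
  qed blast
  have zero: "(\<forall>m\<in>Mt. {m, \<alpha> m} \<notin> S \<longrightarrow> P m)
      \<longleftrightarrow> (\<forall>e\<in>medges - S. \<forall>m\<in>e. P m)" for P
  proof
    assume H: "\<forall>m\<in>Mt. {m, \<alpha> m} \<notin> S \<longrightarrow> P m"
    show "\<forall>e\<in>medges - S. \<forall>m\<in>e. P m"
    proof (intro ballI)
      fix e m assume "e \<in> medges - S" "m \<in> e"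
      then have "m \<in> Mt" "{m, \<alpha> m} = e" using medge_mem by blast+
      then show "P m" using H \<open>e \<in> medges - S\<close> by blast
    qed
  next
    assume "\<forall>e\<in>medges - S. \<forall>m\<in>e. P m"
    then show "\<forall>m\<in>Mt. {m, \<alpha> m} \<notin> S \<longrightarrow> P m" unfolding
        match_edges_def by blast
  qed
  show ?thesis
    unfolding compatible_iff base_compatible_def fits_one_def fits_zero_def one zero
    by (simp only: conj_assoc)
qed

lemma edge_forms:
  fixes h :: "'d \<Rightarrow> nat"
  assumes e: "e \<in> medges"
  shows "fits_one e h \<longleftrightarrow> h (\<sigma> (\<alpha> (rep e))) = h (\<sigma> (rep e))
      \<and> h (\<sigma> (\<sigma> (\<alpha> (rep e)))) = h (\<sigma> (\<sigma> (rep e)))"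
    "fits_zero e h \<longleftrightarrow> h (\<sigma> (\<sigma> (\<alpha> (rep e)))) = h (\<sigma>
        (rep e)) \<and> h (\<sigma> (\<alpha> (rep e))) = h (\<sigma> (\<sigma> (rep e)))"
    "bicoloured e h \<longleftrightarrow> h (\<sigma> (rep e)) \<noteq> h (\<sigma> (\<sigma> (rep
        e))) \<or> h (\<sigma> (\<alpha> (rep e))) \<noteq> h (\<sigma> (\<sigma> (\<alpha> (rep
            e))))"
proof -
  define r where "r = rep e"
  have r: "r \<in> Mt" "e = {r, \<alpha> r}" using medge_rep[OF e] unfolding r_def by auto
  have aa: "\<alpha> (\<alpha> r) = r" using alpha_alpha[OF matching_in[OF r(1)]] .
  have "fits_one e h \<longleftrightarrow> h (\<sigma> (\<alpha> r)) = h (\<sigma> r) \<and> h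
      (\<sigma> (\<sigma> (\<alpha> r))) = h (\<sigma> (\<sigma> r))"
    unfolding fits_one_def r(2) using aa by auto
  then show "fits_one e h \<longleftrightarrow> h (\<sigma> (\<alpha> (rep e))) = h (\<sigma> (rep
      e)) \<and> h (\<sigma> (\<sigma> (\<alpha> (rep e)))) = h (\<sigma> (\<sigma> (rep e)))"
    unfolding r_def .
  have "fits_zero e h \<longleftrightarrow> h (\<sigma> (\<sigma> (\<alpha> r))) = h (\<sigma> r)
      \<and> h (\<sigma> (\<alpha> r)) = h (\<sigma> (\<sigma> r))"
    unfolding fits_zero_def r(2) using aa by auto
  then show "fits_zero e h \<longleftrightarrow> h (\<sigma> (\<sigma> (\<alpha> (rep e)))) = h
      (\<sigma> (rep e)) \<and> h (\<sigma> (\<alpha> (rep e))) = h (\<sigma> (\<sigma> (rep e)))"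
    unfolding r_def .
  have "bicoloured e h \<longleftrightarrow> h (\<sigma> r) \<noteq> h (\<sigma> (\<sigma> r))
      \<or> h (\<sigma> (\<alpha> r)) \<noteq> h (\<sigma> (\<sigma> (\<alpha> r)))"
    unfolding bicoloured_def r(2) by auto
  then show "bicoloured e h \<longleftrightarrow> h (\<sigma> (rep e)) \<noteq> h (\<sigma>
      (\<sigma> (rep e))) \<or> h (\<sigma> (\<alpha> (rep e))) \<noteq> h (\<sigma> (\<sigma>
          (\<alpha> (rep e))))"
    unfolding r_def .
qed


abbreviation labellings :: "nat \<Rightarrow> ('d \<Rightarrow> nat) set" where
  "labellings n \<equiv> NM \<rightarrow>\<^sub>E {1..n}"

lemma finite_NM: "finite NM" unfolding NM_eq using finite_darts by simp

lemma finite_labellings: "finite (labellings n)" using finite_NM by (simp add: finite_PiE)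

text \<open>The perfect matching colourings of \<open>(G, M)\<close>, as colourings of the segments between
  vertices and crossings: constant along each edge of \<open>G - M\<close>, and at every matching edge
  exactly two colours, both of which occur at each of its ends.\<close>

definition pm_colouring :: "('d \<Rightarrow> nat) \<Rightarrow> bool" where
  "pm_colouring h \<longleftrightarrow>
     base_compatible h \<and> (\<forall>e\<in>medges. bicoloured e h \<and> (fits_one e h \<or>
         fits_zero e h))"

lemma sum_pm_colouring:
  "(\<Sum>h\<in>labellings n. of_bool (base_compatible h)
      * of_bool (\<forall>e\<in>medges. bicoloured e h \<and> (fits_one e h \<or> fits_zero e h)))
   = int (card {h \<in> labellings n. pm_colouring h})"
  unfolding pm_colouring_def of_bool_conj[symmetric] by (rule sum_of_bool_int[OF finite_labellings])

lemma state_links_subset: "T \<subseteq> crossings \<Longrightarrow> state_links D \<alpha>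
    \<sigma> Mt S T \<subseteq> NM \<times> NM"
  unfolding state_links_split using smoothing_links_subset node_links_subset by blast

lemma ncomp_power:
  assumes T: "T \<subseteq> crossings"
  shows "int n ^ ncomp D \<alpha> \<sigma> Mt S T = (\<Sum>h\<in>labellings n. of_bool (compatible
      S h \<and> (\<forall>Ob\<in>T. strands_agree h Ob)))"
proof -
  have c: "card {h\<in>labellings n. \<forall>(x,y)\<in>state_links D \<alpha> \<sigma> Mt S T. h x
      = h y} = card {1..n} ^ card (NM // conn (state_links D \<alpha> \<sigma> Mt S T))"
    by (rule card_conn_invariant_functions[OF finite_NM state_links_subset[OF T]])
  have s: "{h\<in>labellings n. \<forall>(x,y)\<in>state_links D \<alpha> \<sigma> Mt S T. h x = h
      y} = {h\<in>labellings n. compatible S h \<and> (\<forall>Ob\<in>T. strands_agree h Ob)}"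
    using compatible_nodes[OF T] by blast
  have "int n ^ ncomp D \<alpha> \<sigma> Mt S T = int (n ^ card (NM // conn (state_links D
      \<alpha> \<sigma> Mt S T)))"
    unfolding ncomp_def by simp
  also have "\<dots> = int (card {h\<in>labellings n. compatible S h \<and> (\<forall>Ob\<in>T.
      strands_agree h Ob)})" using c s by simp
  also have "\<dots> = (\<Sum>h\<in>labellings n. of_bool (compatible S h \<and>
      (\<forall>Ob\<in>T. strands_agree h Ob)))"
    using sum_of_bool_int[OF finite_labellings, of "\<lambda>h. compatible S h \<and>
        (\<forall>Ob\<in>T. strands_agree h Ob)", of n] by simp
  finally show ?thesis .
qed

lemma sum_over_node_sets:
  fixes h :: "'d \<Rightarrow> nat"
  shows "(\<Sum>T\<in>Pow crossings. 2 ^ card T * (-1) ^ card (crossings - T) * of_bool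
      (\<forall>Ob\<in>T. strands_agree h Ob))
     = ((-1::int) ^ card {Ob\<in>crossings. \<not> strands_agree h Ob})"
proof -
  have "(\<Prod>Ob\<in>crossings. 2 * of_bool (strands_agree h Ob) + (-1::int))
     = (\<Sum>X\<in>Pow crossings. (\<Prod>Ob\<in>X. 2 * of_bool (strands_agree h Ob)) *
         (\<Prod>Ob\<in>crossings - X. -1))"
    by (rule prod_add[OF finite_crossings])
  also have "\<dots> = (\<Sum>T\<in>Pow crossings. 2 ^ card T * (-1) ^ card (crossings - T) *
      of_bool (\<forall>Ob\<in>T. strands_agree h Ob))"
  proof (rule sum.cong[OF refl])
    fix X assume "X \<in> Pow crossings"
    then have fX: "finite X" using finite_crossings finite_subset by blast
    have "(\<Prod>Ob\<in>X. 2 * (of_bool (strands_agree h Ob) :: int)) = 2 ^ card X * of_bool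
        (\<forall>Ob\<in>X. strands_agree h Ob)"
      by (simp add: prod.distrib prod_of_bool[OF fX])
    then show "(\<Prod>Ob\<in>X. 2 * of_bool (strands_agree h Ob)) * (\<Prod>Ob\<in>crossings - X.
        -1)
        = 2 ^ card X * (-1) ^ card (crossings - X) * (of_bool (\<forall>Ob\<in>X. strands_agree h
            Ob) :: int)"
      by simp
  qed
  finally have 1: "(\<Prod>Ob\<in>crossings. 2 * of_bool (strands_agree h Ob) + (-1::int))
     = (\<Sum>T\<in>Pow crossings. 2 ^ card T * (-1) ^ card (crossings - T) * of_bool
         (\<forall>Ob\<in>T. strands_agree h Ob))" .
  have "(\<Prod>Ob\<in>crossings. 2 * of_bool (strands_agree h Ob) + (-1::int)) =
      (\<Prod>Ob\<in>crossings. if strands_agree h Ob then 1 else -1)"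
    by (rule prod.cong[OF refl]) simp
  also have "\<dots> = (-1) ^ card {Ob\<in>crossings. \<not> strands_agree h Ob}" by (rule
      prod_sign[OF finite_crossings])
  finally show ?thesis using 1 by simp
qed

definition weight_one :: "('d \<Rightarrow> nat) \<Rightarrow> 'd set \<Rightarrow> int" where
  "weight_one h e = (if bicoloured e h then 1 else -1) * of_bool (fits_one e h)"
definition weight_zero :: "('d \<Rightarrow> nat) \<Rightarrow> 'd set \<Rightarrow> int" where
  "weight_zero h e = of_bool (fits_zero e h)"

lemma state_term:
  fixes h :: "'d \<Rightarrow> nat"
  assumes S: "S \<subseteq> medges"
  shows "(-1) ^ card S * of_bool (compatible S h) * (-1) ^ card {Ob\<in>crossings. \<not>
      strands_agree h Ob}
     = of_bool (base_compatible h) * ((\<Prod>e\<in>S. weight_one h e) * (\<Prod>e\<in>medges - S.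
         weight_zero h e))"
proof -
  have fS: "finite S" using S finite_medges finite_subset by blast
  have fS2: "finite (medges - S)" using finite_medges by simp
  have p1: "(\<Prod>e\<in>S. weight_one h e) = (-1) ^ card {e\<in>S. \<not> bicoloured e h} *
      of_bool (\<forall>e\<in>S. fits_one e h)"
    unfolding weight_one_def prod.distrib prod_sign[OF fS] prod_of_bool[OF fS] ..
  have p0: "(\<Prod>e\<in>medges - S. weight_zero h e) = of_bool (\<forall>e\<in>medges - S.
      fits_zero e h)"
    unfolding weight_zero_def prod_of_bool[OF fS2] ..
  show ?thesis
  proof (cases "compatible S h")
    case True
    have b: "base_compatible h" "\<forall>e\<in>S. fits_one e h" "\<forall>e\<in>medges - S.
        fits_zero e h" using True compatible_state_iff[OF S] by auto
    have ev: "even (card {Ob\<in>crossings. \<exists>d\<in>Ob. h d \<noteq> h (\<sigma> d)} + card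
        {e\<in>S. \<exists>m\<in>e. h (\<sigma> m) \<noteq> h (\<sigma> (\<sigma> m))})"
      by (rule crossing_parity[OF True S])
    have e1: "{Ob\<in>crossings. \<not> strands_agree h Ob} = {Ob\<in>crossings. \<exists>d\<in>Ob.
        h d \<noteq> h (\<sigma> d)}" unfolding strands_agree_def by blast
    have e2: "{e\<in>S. \<exists>m\<in>e. h (\<sigma> m) \<noteq> h (\<sigma> (\<sigma> m))} =
        {e\<in>S. bicoloured e h}" unfolding bicoloured_def ..
    have "(-1::int) ^ card {Ob\<in>crossings. \<not> strands_agree h Ob} = (-1) ^ card {e\<in>S.
        bicoloured e h}"
      unfolding e1 e2[symmetric] by (rule minus_one_power_even_add[OF ev])
    then have "(-1) ^ card S * of_bool (compatible S h) * (-1) ^ card {Ob\<in>crossings. \<not>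
        strands_agree h Ob}
        = (-1::int) ^ card S * (-1) ^ card {e\<in>S. bicoloured e h}" using True by simp
    also have "\<dots> = (-1) ^ card {e\<in>S. \<not> bicoloured e h}" by (rule
        minus_one_power_card_split[OF fS])
    finally show ?thesis using p1 p0 b by simp
  next
    case False
    then have "\<not> (base_compatible h \<and> (\<forall>e\<in>S. fits_one e h) \<and>
        (\<forall>e\<in>medges - S. fits_zero e h))" using compatible_state_iff[OF S] by simp
    then show ?thesis using False p1 p0 by auto
  qed
qed

lemma weight_sum:
  fixes h :: "'d \<Rightarrow> nat"
  assumes e: "e \<in> medges"
  shows "weight_one h e + weight_zero h e = of_bool (bicoloured e h \<and> (fits_one e h \<or>
      fits_zero e h))"
  unfolding weight_one_def weight_zero_def edge_forms[OF e] by auto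

lemma pk_bracket_eq_card_pm_colourings:
  "pk_bracket D \<alpha> \<sigma> Mt n = int (card {h \<in> labellings n. pm_colouring h})"
proof -
  have "pk_bracket D \<alpha> \<sigma> Mt n = (\<Sum>S\<in>Pow medges. \<Sum>T\<in>Pow crossings.
      (-1) ^ card S * 2 ^ card T * (-1) ^ card (crossings - T) * (\<Sum>h\<in>labellings n. of_bool
          (compatible S h \<and> (\<forall>Ob\<in>T. strands_agree h Ob))))"
    unfolding pk_bracket_def
    by (intro sum.cong refl) (simp add: ncomp_power)
  also have "\<dots> = (\<Sum>S\<in>Pow medges. \<Sum>h\<in>labellings n. \<Sum>T\<in>Pow crossings.
      (-1) ^ card S * 2 ^ card T * (-1) ^ card (crossings - T) * of_bool (compatible S h \<and>
          (\<forall>Ob\<in>T. strands_agree h Ob)))"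
    by (intro sum.cong refl) (simp add: sum_distrib_left sum.swap[of _ "Pow crossings"])
  also have "\<dots> = (\<Sum>S\<in>Pow medges. \<Sum>h\<in>labellings n. (-1) ^ card S * of_bool
      (compatible S h) * (-1) ^ card {Ob\<in>crossings. \<not> strands_agree h Ob})"
  proof (intro sum.cong refl)
    fix S and h :: "'d \<Rightarrow> nat"
    have "(\<Sum>T\<in>Pow crossings. (-1::int) ^ card S * 2 ^ card T * (-1) ^ card (crossings - T)
        * of_bool (compatible S h \<and> (\<forall>Ob\<in>T. strands_agree h Ob)))
      = (-1) ^ card S * of_bool (compatible S h) * (\<Sum>T\<in>Pow crossings. 2 ^ card T * (-1) ^
          card (crossings - T) * of_bool (\<forall>Ob\<in>T. strands_agree h Ob))"
      by (simp add: sum_distrib_left mult.assoc mult.left_commute)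
    also have "\<dots> = (-1) ^ card S * of_bool (compatible S h) * (-1) ^ card {Ob\<in>crossings.
        \<not> strands_agree h Ob}"
      unfolding sum_over_node_sets ..
    finally show "(\<Sum>T\<in>Pow crossings. (-1::int) ^ card S * 2 ^ card T * (-1) ^ card
        (crossings - T) * of_bool (compatible S h \<and> (\<forall>Ob\<in>T. strands_agree h Ob)))
      = (-1) ^ card S * of_bool (compatible S h) * (-1) ^ card {Ob\<in>crossings. \<not>
          strands_agree h Ob}" .
  qed
  also have "\<dots> = (\<Sum>h\<in>labellings n. \<Sum>S\<in>Pow medges. (-1) ^ card S * of_bool
      (compatible S h) * (-1) ^ card {Ob\<in>crossings. \<not> strands_agree h Ob})"
    by (rule sum.swap)
  also have "\<dots> = (\<Sum>h\<in>labellings n. \<Sum>S\<in>Pow medges. of_bool (base_compatible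
      h) * ((\<Prod>e\<in>S. weight_one h e) * (\<Prod>e\<in>medges - S. weight_zero h e)))"
    by (intro sum.cong refl) (rule state_term, blast)
  also have "\<dots> = (\<Sum>h\<in>labellings n. of_bool (base_compatible h) *
      (\<Prod>e\<in>medges. weight_one h e + weight_zero h e))"
    by (intro sum.cong refl) (simp add: sum_distrib_left[symmetric] prod_add[OF finite_medges])
  also have "\<dots> = (\<Sum>h\<in>labellings n. of_bool (base_compatible h) * of_bool
      (\<forall>e\<in>medges. bicoloured e h \<and> (fits_one e h \<or> fits_zero e h)))"
  proof (intro sum.cong refl)
    fix h :: "'d \<Rightarrow> nat"
    have "(\<Prod>e\<in>medges. weight_one h e + weight_zero h e) = (\<Prod>e\<in>medges. (of_bool
        (bicoloured e h \<and> (fits_one e h \<or> fits_zero e h)) :: int))"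
      by (rule prod.cong[OF refl]) (rule weight_sum)
    also have "\<dots> = of_bool (\<forall>e\<in>medges. bicoloured e h \<and> (fits_one e h \<or>
        fits_zero e h))" by (rule prod_of_bool[OF finite_medges])
    finally show "of_bool (base_compatible h) * (\<Prod>e\<in>medges. weight_one h e + weight_zero
        h e) = of_bool (base_compatible h) * of_bool (\<forall>e\<in>medges. bicoloured e h \<and>
            (fits_one e h \<or> fits_zero e h))"
      by simp
  qed
  also have "\<dots> = int (card {h \<in> labellings n. pm_colouring h})"
    by (rule sum_pm_colouring)
  finally show ?thesis .
qed


definition all_ends_bicoloured :: "('d \<Rightarrow> nat) \<Rightarrow> bool" where
  "all_ends_bicoloured h \<longleftrightarrow> (\<forall>m\<in>Mt. h (\<sigma> m) \<noteq> h
      (\<sigma> (\<sigma> m)))"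

lemma state_colorings_eq:
  "state_colorings D \<alpha> \<sigma> Mt S n = card {h\<in>labellings n. compatible S h \<and>
      all_ends_bicoloured h}"
proof -
  let ?R = "conn (smoothing_links S)"
  have s: "{g \<in> NM // ?R \<rightarrow>\<^sub>E {1..n}. \<forall>m\<in>Mt. g (?R `` {\<sigma>
      m}) \<noteq> g (?R `` {\<sigma> (\<sigma> m)})}
     = {g \<in> NM // ?R \<rightarrow>\<^sub>E {1..n}. all_ends_bicoloured (\<lambda>x\<in>NM. g
         (?R `` {x}))}"
  proof (rule Collect_cong)
    fix g
    have "(\<forall>m\<in>Mt. g (?R `` {\<sigma> m}) \<noteq> g (?R `` {\<sigma> (\<sigma> m)}))
        \<longleftrightarrow> all_ends_bicoloured (\<lambda>x\<in>NM. g (?R `` {x}))"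
    proof -
      have "\<sigma> m \<in> NM" "\<sigma> (\<sigma> m) \<in> NM" if "m \<in> Mt" for m
        using matching_dart[OF that] unfolding NM_eq by auto
      then show ?thesis unfolding all_ends_bicoloured_def by auto
    qed
    then show "(g \<in> NM // ?R \<rightarrow>\<^sub>E {1..n} \<and> (\<forall>m\<in>Mt. g (?R ``
        {\<sigma> m}) \<noteq> g (?R `` {\<sigma> (\<sigma> m)}))) =
      (g \<in> NM // ?R \<rightarrow>\<^sub>E {1..n} \<and> all_ends_bicoloured (\<lambda>x\<in>NM.
          g (?R `` {x})))" by simp
  qed
  have "state_colorings D \<alpha> \<sigma> Mt S n = card {g \<in> NM // ?R \<rightarrow>\<^sub>E
      {1..n}. \<forall>m\<in>Mt. g (?R `` {\<sigma> m}) \<noteq> g (?R `` {\<sigma> (\<sigma> m)})}"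
    unfolding state_colorings_def Let_def smoothing_links_def ..
  also have "\<dots> = card {h\<in>labellings n. (\<forall>(x,y)\<in>smoothing_links S. h x = h y)
      \<and> all_ends_bicoloured h}"
    unfolding s by (rule card_conn_quotient_functions_with[OF finite_NM smoothing_links_subset])
  finally show ?thesis unfolding compatible_def .
qed

lemma edge_weights_coloring:
  fixes h :: "'d \<Rightarrow> nat"
  shows "of_bool (base_compatible h \<and> all_ends_bicoloured h) * (\<Prod>e\<in>medges. of_bool
      (fits_one e h) + of_bool (fits_zero e h))
     = of_bool (base_compatible h) * (of_bool (\<forall>e\<in>medges. bicoloured e h \<and>
         (fits_one e h \<or> fits_zero e h)) :: int)"
proof (cases "all_ends_bicoloured h")
  case True
  have "(\<Prod>e\<in>medges. of_bool (fits_one e h) + of_bool (fits_zero e h)) =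
      (\<Prod>e\<in>medges. (of_bool (bicoloured e h \<and> (fits_one e h \<or> fits_zero e h)) ::
          int))"
  proof (rule prod.cong[OF refl])
    fix e assume e: "e \<in> medges"
    have r: "rep e \<in> Mt" using medge_rep[OF e] by simp
    have ab: "h (\<sigma> (rep e)) \<noteq> h (\<sigma> (\<sigma> (rep e)))" using True r unfolding
        all_ends_bicoloured_def by blast
    have d: "bicoloured e h" using edge_forms(3)[OF e] ab by simp
    show "of_bool (fits_one e h) + of_bool (fits_zero e h) = (of_bool (bicoloured e h \<and>
        (fits_one e h \<or> fits_zero e h)) :: int)"
      unfolding edge_forms(1,2)[OF e] using ab d by auto
  qed
  also have "\<dots> = of_bool (\<forall>e\<in>medges. bicoloured e h \<and> (fits_one e h \<or>
      fits_zero e h))" by (rule prod_of_bool[OF finite_medges])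
  finally show ?thesis using True by simp
next
  case False
  then obtain m where m: "m \<in> Mt" "h (\<sigma> m) = h (\<sigma> (\<sigma> m))" unfolding
      all_ends_bicoloured_def by blast
  have e0: "{m, \<alpha> m} \<in> medges" unfolding match_edges_def using m(1) by blast
  have aa: "\<alpha> (\<alpha> m) = m" using alpha_alpha[OF matching_in[OF m(1)]] .
  have "\<not> (bicoloured {m, \<alpha> m} h \<and> (fits_one {m, \<alpha> m} h \<or> fits_zero {m,
      \<alpha> m} h))"
  proof
    assume H: "bicoloured {m, \<alpha> m} h \<and> (fits_one {m, \<alpha> m} h \<or> fits_zero {m,
        \<alpha> m} h)"
    then have d: "h (\<sigma> (\<alpha> m)) \<noteq> h (\<sigma> (\<sigma> (\<alpha> m)))" using
        m(2) unfolding bicoloured_def by auto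
    from H have "fits_one {m, \<alpha> m} h \<or> fits_zero {m, \<alpha> m} h" by blast
    then show False
    proof
      assume "fits_one {m, \<alpha> m} h"
      then have "h (\<sigma> (\<alpha> m)) = h (\<sigma> m)" "h (\<sigma> (\<sigma> (\<alpha> m)))
          = h (\<sigma> (\<sigma> m))" unfolding fits_one_def by auto
      then show False using d m(2) by simp
    next
      assume "fits_zero {m, \<alpha> m} h"
      then have "h (\<sigma> (\<sigma> (\<alpha> m))) = h (\<sigma> m)" "h (\<sigma> (\<alpha> m))
          = h (\<sigma> (\<sigma> m))" unfolding fits_zero_def by auto
      then show False using d m(2) by simp
    qed
  qed
  then have "\<not> (\<forall>e\<in>medges. bicoloured e h \<and> (fits_one e h \<or> fits_zero e
      h))" using e0 by blast
  then show ?thesis using False by simp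
qed

lemma color_bracket_eq_card_pm_colourings:
  "color_bracket D \<alpha> \<sigma> Mt n = int (card {h \<in> labellings n. pm_colouring h})"
proof -
  have "color_bracket D \<alpha> \<sigma> Mt n = (\<Sum>S\<in>Pow medges. \<Sum>h\<in>labellings n.
      (of_bool (compatible S h \<and> all_ends_bicoloured h) :: int))"
    unfolding color_bracket_def state_colorings_eq
    by (intro sum.cong refl) (rule sum_of_bool_int[OF finite_labellings, symmetric])
  also have "\<dots> = (\<Sum>h\<in>labellings n. \<Sum>S\<in>Pow medges. (of_bool (compatible S h
      \<and> all_ends_bicoloured h) :: int))"
    by (rule sum.swap)
  also have "\<dots> = (\<Sum>h\<in>labellings n. \<Sum>S\<in>Pow medges. of_bool (base_compatible
      h \<and> all_ends_bicoloured h) *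
      ((\<Prod>e\<in>S. of_bool (fits_one e h)) * (\<Prod>e\<in>medges - S. of_bool (fits_zero e
          h))))"
  proof (intro sum.cong refl)
    fix h :: "'d \<Rightarrow> nat" and S assume "S \<in> Pow medges"
    then have S: "S \<subseteq> medges" by blast
    have fS: "finite S" using S finite_medges finite_subset by blast
    have fS2: "finite (medges - S)" using finite_medges by simp
    show "(of_bool (compatible S h \<and> all_ends_bicoloured h) :: int) = of_bool (base_compatible
        h \<and> all_ends_bicoloured h) *
      ((\<Prod>e\<in>S. of_bool (fits_one e h)) * (\<Prod>e\<in>medges - S. of_bool (fits_zero e
          h)))"
      unfolding prod_of_bool[OF fS] prod_of_bool[OF fS2] of_bool_conj[symmetric]
          compatible_state_iff[OF S]
      by (rule arg_cong[where f=of_bool]) blast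
  qed
  also have "\<dots> = (\<Sum>h\<in>labellings n. of_bool (base_compatible h \<and>
      all_ends_bicoloured h) * (\<Prod>e\<in>medges. of_bool (fits_one e h) + of_bool (fits_zero e
          h)))"
    by (intro sum.cong refl) (simp add: sum_distrib_left[symmetric] prod_add[OF finite_medges])
  also have "\<dots> = (\<Sum>h\<in>labellings n. of_bool (base_compatible h) * of_bool
      (\<forall>e\<in>medges. bicoloured e h \<and> (fits_one e h \<or> fits_zero e h)))"
    by (intro sum.cong refl) (rule edge_weights_coloring)
  also have "\<dots> = int (card {h \<in> labellings n. pm_colouring h})"
    by (rule sum_pm_colouring)
  finally show ?thesis .
qed

end

theorem theorem4p10:
  fixes D :: "'d set" and alpha sigma :: "'d \<Rightarrow> 'd" and Mt :: "'d set" and n :: nat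
  assumes "pm_diagram D alpha sigma Mt"
    and "n > 0"
  shows "pk_bracket D alpha sigma Mt n = color_bracket D alpha sigma Mt n"
proof -
  interpret matching_diagram D alpha sigma Mt by unfold_locales (rule assms(1))
  show ?thesis
    using pk_bracket_eq_card_pm_colourings color_bracket_eq_card_pm_colourings by simp
qed

end
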